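(* Let $k\ge1$ be the cache size and let $G$ be any access graph containing a path with $k+1$ vertices. If $k$ is odd, then \[\mathcal{I}^{G}[\mathrm{FWF},\mathrm{FIFO}]=\left[0,\ 1-\frac1k\right],\] and if $k$ is even, then \[\left[0,\ \frac{k^2-k-1}{k^2}\right]\subseteq \mathcal{I}^{G}[\mathrm{FWF},\mathrm{FIFO}]\subseteq\left[0,\ \frac{k-1}{k}\right].\]
   Context: Paging: a cache holds at most $k$ pages and is initially empty. A request to a page in the cache is a hit; otherwise it is a fault, the page is brought into the cache, evicting a page first if the cache is full. $\mathcal{A}(I)$ is the number of faults of $\mathcal{A}$ on request sequence $I$. FIFO evicts the cached page that entered the cache earliest. FWF (flush-when-full): on a fault with a full cache, it empties the cache and then brings in the requested page. Access graph: a graph $G$ whose vertices are the pages; a request sequence respects $G$ if any two consecutive requests are identical or adjacent in $G$; $L(G)$ is the set of such sequences. Relative interval: $\mathrm{Min}_{\mathcal{A},\mathcal{B}}(n,G)=\min\{\mathcal{A}(I)-\mathcal{B}(I): I\in L(G),|I|=n\}$, $\mathrm{Max}_{\mathcal{A},\mathcal{B}}(n,G)$ analogously with max; $\mathrm{Min}^G(\mathcal{A},\mathcal{B})=\liminf_{n\to\infty}\mathrm{Min}_{\mathcal{A},\mathcal{B}}(n,G)/n$, $\mathrm{Max}^G(\mathcal{A},\mathcal{B})=\limsup_{n\to\infty}\mathrm{Max}_{\mathcal{A},\mathcal{B}}(n,G)/n$, and $\mathcal{I}^G[\mathcal{A},\mathcal{B}]=[\mathrm{Min}^G(\mathcal{A},\mathcal{B}),\mathrm{Max}^G(\mathcal{A},\mathcal{B})]$.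 *)

theory Defs
  imports "HOL-Library.Extended_Real" "HOL-Library.Liminf_Limsup"
begin

text \<open>FIFO: the cache is a queue (list, oldest page first). Returns the number of faults
  when serving the request sequence starting from the given cache contents.\<close>
fun fifo_faults :: "nat \<Rightarrow> 'a list \<Rightarrow> 'a list \<Rightarrow> nat" where
  "fifo_faults k q [] = 0"
| "fifo_faults k q (r # rs) =
     (if r \<in> set q then fifo_faults k q rs
      else Suc (fifo_faults k (if length q < k then q @ [r] else tl q @ [r]) rs))"

definition FIFO :: "nat \<Rightarrow> 'a list \<Rightarrow> nat" where
  "FIFO k I = fifo_faults k [] I"

fun fwf_faults :: "nat \<Rightarrow> 'a set \<Rightarrow> 'a list \<Rightarrow> nat" where
  "fwf_faults k C [] = 0"
| "fwf_faults k C (r # rs) =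
     (if r \<in> C then fwf_faults k C rs
      else Suc (fwf_faults k (if card C < k then insert r C else {r}) rs))"

definition FWF :: "nat \<Rightarrow> 'a list \<Rightarrow> nat" where
  "FWF k I = fwf_faults k {} I"

definition access_graph :: "'a set \<Rightarrow> ('a \<Rightarrow> 'a \<Rightarrow> bool) \<Rightarrow> bool" where
  "access_graph V E \<longleftrightarrow> finite V \<and> (\<forall>x y. E x y \<longrightarrow> x \<in> V \<and> y \<in> V)
     \<and> (\<forall>x y. E x y \<longrightarrow> E y x) \<and> (\<forall>x. \<not> E x x)"

definition respects_graph :: "'a set \<Rightarrow> ('a \<Rightarrow> 'a \<Rightarrow> bool) \<Rightarrow> 'a list \<Rightarrow> bool" where
  "respects_graph V E I \<longleftrightarrow> set I \<subseteq> V \<and>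
     (\<forall>i. Suc i < length I \<longrightarrow> I ! i = I ! Suc i \<or> E (I ! i) (I ! Suc i))"

definition has_path :: "'a set \<Rightarrow> ('a \<Rightarrow> 'a \<Rightarrow> bool) \<Rightarrow> nat \<Rightarrow> bool" where
  "has_path V E m \<longleftrightarrow> (\<exists>p. length p = m \<and> distinct p \<and> set p \<subseteq> V \<and>
     (\<forall>i. Suc i < length p \<longrightarrow> E (p ! i) (p ! Suc i)))"

definition diffs :: "('a list \<Rightarrow> nat) \<Rightarrow> ('a list \<Rightarrow> nat) \<Rightarrow> nat \<Rightarrow>
    'a set \<Rightarrow> ('a \<Rightarrow> 'a \<Rightarrow> bool) \<Rightarrow> real set" where
  "diffs A B n V E = {real (A I) - real (B I) | I. respects_graph V E I \<and> length I = n}"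

definition MinAB :: "('a list \<Rightarrow> nat) \<Rightarrow> ('a list \<Rightarrow> nat) \<Rightarrow> nat \<Rightarrow>
    'a set \<Rightarrow> ('a \<Rightarrow> 'a \<Rightarrow> bool) \<Rightarrow> real" where
  "MinAB A B n V E = Min (diffs A B n V E)"

definition MaxAB :: "('a list \<Rightarrow> nat) \<Rightarrow> ('a list \<Rightarrow> nat) \<Rightarrow> nat \<Rightarrow>
    'a set \<Rightarrow> ('a \<Rightarrow> 'a \<Rightarrow> bool) \<Rightarrow> real" where
  "MaxAB A B n V E = Max (diffs A B n V E)"

definition MinG :: "('a list \<Rightarrow> nat) \<Rightarrow> ('a list \<Rightarrow> nat) \<Rightarrow>
    'a set \<Rightarrow> ('a \<Rightarrow> 'a \<Rightarrow> bool) \<Rightarrow> ereal" where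
  "MinG A B V E = liminf (\<lambda>n. ereal (MinAB A B n V E / real n))"

definition MaxG :: "('a list \<Rightarrow> nat) \<Rightarrow> ('a list \<Rightarrow> nat) \<Rightarrow>
    'a set \<Rightarrow> ('a \<Rightarrow> 'a \<Rightarrow> bool) \<Rightarrow> ereal" where
  "MaxG A B V E = limsup (\<lambda>n. ereal (MaxAB A B n V E / real n))"

definition rel_interval :: "('a list \<Rightarrow> nat) \<Rightarrow> ('a list \<Rightarrow> nat) \<Rightarrow>
    'a set \<Rightarrow> ('a \<Rightarrow> 'a \<Rightarrow> bool) \<Rightarrow> ereal set" where
  "rel_interval A B V E = {MinG A B V E .. MaxG A B V E}"

end

theory Submission
  imports Defs
begin

text \<open>FIFO never faults more often than FWF, since between two flushes of FWF it loads every page at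
  most once. Conversely FWF faults at most \<open>k\<close> times per fault of FIFO (plus \<open>k\<close>) and at most
  once per request, so on \<open>n\<close> requests FWF exceeds FIFO by at most \<open>(1 - 1/k) n + 1\<close>.

  For the lower bound, number the vertices of the path \<open>0, \<dots>, k\<close>, load FIFO's queue with all but
  one of them in zigzag order around the centre, and then bounce along the path
  \<open>0, 1, \<dots>, k, k - 1, \<dots>, 1, 0, \<dots>\<close>. Eventually FWF faults on every request of this walk. FIFO faults
  only when its single missing page is requested, whereupon the missing page advances along the
  zigzag cycle; the zigzag order makes it advance about twice per round, so FIFO faults \<open>k + 1\<close>
  times every \<open>h\<close> rounds of length \<open>2k\<close>, with \<open>h = (k + 1)/2\<close> for odd and \<open>h = k/2\<close> for even
  \<open>k\<close>. The difference per request thus tends to \<open>1 - (k + 1)/(2kh)\<close>.\<close>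

fun fifo_queue :: "nat \<Rightarrow> 'a list \<Rightarrow> 'a list \<Rightarrow> 'a list" where
  "fifo_queue k q [] = q"
| "fifo_queue k q (r # rs) =
     (if r \<in> set q then fifo_queue k q rs
      else fifo_queue k (if length q < k then q @ [r] else tl q @ [r]) rs)"

fun fwf_cache :: "nat \<Rightarrow> 'a set \<Rightarrow> 'a list \<Rightarrow> 'a set" where
  "fwf_cache k C [] = C"
| "fwf_cache k C (r # rs) =
     (if r \<in> C then fwf_cache k C rs
      else fwf_cache k (if card C < k then insert r C else {r}) rs)"

lemma fifo_faults_append:
  "fifo_faults k q (xs @ ys) = fifo_faults k q xs + fifo_faults k (fifo_queue k q xs) ys"
  by (induction xs arbitrary: q) auto

lemma fifo_queue_append: "fifo_queue k q (xs @ ys) = fifo_queue k (fifo_queue k q xs) ys"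
  by (induction xs arbitrary: q) auto

lemma fwf_faults_append:
  "fwf_faults k C (xs @ ys) = fwf_faults k C xs + fwf_faults k (fwf_cache k C xs) ys"
  by (induction xs arbitrary: C) auto

lemma fwf_cache_append: "fwf_cache k C (xs @ ys) = fwf_cache k (fwf_cache k C xs) ys"
  by (induction xs arbitrary: C) auto

lemma fwf_faults_le_length: "fwf_faults k C xs \<le> length xs"
  by (induction xs arbitrary: C) (auto intro: le_SucI)

lemma fifo_faults_le_length: "fifo_faults k q xs \<le> length xs"
  by (induction xs arbitrary: q) (auto intro: le_SucI)

lemma length_fifo_queue_le: "1 \<le> k \<Longrightarrow> length q \<le> k \<Longrightarrow> length (fifo_queue k q xs) \<le> k"
  by (induction xs arbitrary: q) (auto simp: le_diff_conv)

lemma fwf_cache_card_le: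
  "1 \<le> k \<Longrightarrow> finite C \<Longrightarrow> card C \<le> k
    \<Longrightarrow> finite (fwf_cache k C xs) \<and> card (fwf_cache k C xs) \<le> k"
  by (induction xs arbitrary: C) auto

section \<open>FIFO and FWF compared\<close>

text \<open>Potential for the amortised comparison: each FWF fault uses up one unit of slack, each
  FIFO fault provides at most \<open>k\<close> new units.\<close>
definition fwf_slack :: "nat \<Rightarrow> 'a set \<Rightarrow> 'a list \<Rightarrow> nat" where
  "fwf_slack k C q = (if C \<subseteq> set q then k else 2 * k) - card C"

lemma fwf_slack_step:
  assumes k: "1 \<le> k" and C: "finite C" "card C \<le> k" and q: "length q \<le> k"
  shows "fwf_faults k C [r] + fwf_slack k (fwf_cache k C [r]) (fifo_queue k q [r])
           \<le> k * fifo_faults k q [r] + fwf_slack k C q"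
proof (cases "r \<in> C")
  case True
  then show ?thesis by (auto simp: fwf_slack_def)
next
  case rC: False
  have "r \<in> set (fifo_queue k q [r])" using k by (cases q) auto
  moreover have "\<not> C \<subseteq> set q" if "card C = k" "r \<in> set q"
  proof
    assume "C \<subseteq> set q"
    moreover have "card (set q) \<le> k" using q card_length le_trans by blast
    ultimately have "C = set q" using \<open>card C = k\<close> by (metis card_seteq List.finite_set)
    with rC \<open>r \<in> set q\<close> show False by simp
  qed
  ultimately show ?thesis
    using rC C k by (cases "card C < k"; cases "r \<in> set q") (auto simp: fwf_slack_def)
qed

lemma fwf_faults_fwf_slack_le:
  assumes "1 \<le> k" "finite C" "card C \<le> k" "length q \<le> k"
  shows "fwf_faults k C rs + fwf_slack k (fwf_cache k C rs) (fifo_queue k q rs)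
           \<le> k * fifo_faults k q rs + fwf_slack k C q"
  using assms
proof (induction rs arbitrary: C q)
  case (Cons r rs)
  let ?C = "fwf_cache k C [r]" and ?q = "fifo_queue k q [r]"
  have "fwf_faults k ?C rs + fwf_slack k (fwf_cache k ?C rs) (fifo_queue k ?q rs)
          \<le> k * fifo_faults k ?q rs + fwf_slack k ?C ?q"
    using Cons fwf_cache_card_le[of k C "[r]"] length_fifo_queue_le[of k q "[r]"] by blast
  then show ?case
    using fwf_slack_step[OF Cons.prems, of r]
      fwf_faults_append[of k C "[r]" rs] fwf_cache_append[of k C "[r]" rs]
      fifo_faults_append[of k q "[r]" rs] fifo_queue_append[of k q "[r]" rs]
    by (simp add: algebra_simps)
qed simp

lemma FWF_le_FIFO_times: "1 \<le> k \<Longrightarrow> FWF k I \<le> k * FIFO k I + k"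
  using fwf_faults_fwf_slack_le[of k "{}" "[]" I] by (simp add: FIFO_def FWF_def fwf_slack_def)

lemma fifo_faults_Cons_fault:
  assumes "r \<notin> set q" "q = A @ B" "length B < k"
  obtains A' where "fifo_faults k q (r # rs) = Suc (fifo_faults k (A' @ B @ [r]) rs)"
proof (cases "length q < k")
  case False
  then have "A \<noteq> []" using assms by auto
  then show ?thesis using that[of "tl A"] False assms by auto
qed (use assms that in auto)

text \<open>FIFO is conservative: \<open>B\<close> is the part of FIFO's queue loaded since FWF's last flush,
  all of whose pages are still cached by FWF.\<close>
lemma fifo_faults_le_fwf_faults:
  assumes "1 \<le> k" "finite C" "card C \<le> k" "q = A @ B" "set B \<subseteq> C" "distinct B"
  shows "fifo_faults k q rs + length B \<le> fwf_faults k C rs + card C"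
  using assms(2-)
proof (induction rs arbitrary: C q A B)
  case Nil
  then show ?case using card_mono[of C "set B"] distinct_card[of B] by auto
next
  case (Cons r rs)
  have B: "length B \<le> card C" using Cons.prems card_mono[of C "set B"] distinct_card[of B] by auto
  have ins: "finite (insert r C)" "r \<notin> C \<Longrightarrow> card (insert r C) = Suc (card C)"
    using Cons.prems(1) by auto
  show ?case
  proof (cases "r \<in> set q")
    case True
    consider "r \<in> C" | "r \<notin> C" "card C < k" | "r \<notin> C" "card C = k" using Cons.prems(2) by linarith
    then show ?thesis
    proof cases
      case 2
      then show ?thesis using Cons.IH[of "insert r C" q A B] True ins Cons.prems by auto
    next
      case 3
      then show ?thesis using Cons.IH[of "{r}" q q "[]"] True B assms(1) by simp
    qed (use Cons True in auto)
  next
    case False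
    then have rB: "r \<notin> set B" using Cons.prems(3) by simp
    consider "r \<in> C" | "r \<notin> C" "card C < k" | "r \<notin> C" "card C = k" using Cons.prems(2) by linarith
    then show ?thesis
    proof cases
      case 1
      then have "set B \<subset> C" using rB Cons.prems(4) by auto
      then have "length B < card C" using Cons.prems(1,5) psubset_card_mono distinct_card by metis
      with Cons.prems(2,3) False obtain A' where "fifo_faults k q (r # rs) = Suc (fifo_faults k (A' @ B @ [r]) rs)"
        using fifo_faults_Cons_fault by (metis order_less_le_trans)
      then show ?thesis using Cons.IH[of C "A' @ B @ [r]" A' "B @ [r]"] Cons.prems 1 rB by simp
    next
      case 2
      with Cons.prems(3) False B obtain A' where "fifo_faults k q (r # rs) = Suc (fifo_faults k (A' @ B @ [r]) rs)"
        using fifo_faults_Cons_fault by (metis order_le_less_trans)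
      then show ?thesis using Cons.IH[of "insert r C" "A' @ B @ [r]" A' "B @ [r]"] Cons.prems 2 rB ins by auto
    next
      case 3
      obtain A' where "fifo_faults k q (r # rs) = Suc (fifo_faults k (A' @ [r]) rs)"
        by (rule fifo_faults_Cons_fault[of r q q "[]" k rs]) (use False assms(1) in auto)
      then show ?thesis using Cons.IH[of "{r}" "A' @ [r]" A' "[r]"] 3 B assms(1) by simp
    qed
  qed
qed

lemma FIFO_le_FWF: "1 \<le> k \<Longrightarrow> FIFO k I \<le> FWF k I"
  using fifo_faults_le_fwf_faults[of k "{}" "[]" "[]" "[]" I] by (simp add: FIFO_def FWF_def)

lemma FWF_le_length: "FWF k I \<le> length I"
  by (simp add: FWF_def fwf_faults_le_length)

lemma FWF_minus_FIFO_le: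
  assumes "1 \<le> k"
  shows "real (FWF k I) - real (FIFO k I) \<le> (1 - 1 / real k) * real (length I) + 1"
proof -
  have kp: "real k > 0" using assms by simp
  have "real (FWF k I) \<le> real k * real (FIFO k I) + real k"
    using FWF_le_FIFO_times[OF assms, of I] by (metis of_nat_add of_nat_le_iff of_nat_mult)
  then have "real (FIFO k I) \<ge> real (FWF k I) / real k - 1" using kp by (simp add: field_simps)
  then have "real (FWF k I) - real (FIFO k I) \<le> (1 - 1 / real k) * real (FWF k I) + 1"
    by (simp add: algebra_simps)
  also have "\<dots> \<le> (1 - 1 / real k) * real (length I) + 1"
    using FWF_le_length[of k I] kp assms by (intro add_right_mono mult_left_mono) (auto simp: field_simps)
  finally show ?thesis .
qed

lemma FWF_replicate: "1 \<le> k \<Longrightarrow> FWF k (replicate n v) = (if n = 0 then 0 else 1)"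
proof -
  have "v \<in> C \<Longrightarrow> fwf_faults k C (replicate n v) = 0" for C n
    by (induction n) auto
  then show "1 \<le> k \<Longrightarrow> ?thesis" by (cases n) (auto simp: FWF_def)
qed

lemma FIFO_replicate: "1 \<le> k \<Longrightarrow> FIFO k (replicate n v) = (if n = 0 then 0 else 1)"
proof -
  have "v \<in> set q \<Longrightarrow> fifo_faults k q (replicate n v) = 0" for q n
    by (induction n) auto
  then show "1 \<le> k \<Longrightarrow> ?thesis" by (cases n) (auto simp: FIFO_def)
qed

lemma respects_graph_replicate: "v \<in> V \<Longrightarrow> respects_graph V E (replicate n v)"
  by (auto simp: respects_graph_def)

lemma finite_diffs: "finite V \<Longrightarrow> finite (diffs A B n V E)"
proof -
  assume fV: "finite V"
  have "diffs A B n V E \<subseteq> (\<lambda>I. real (A I) - real (B I)) ` {I. set I \<subseteq> V \<and> length I = n}"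
    by (auto simp: diffs_def respects_graph_def)
  moreover have "finite {I. set I \<subseteq> V \<and> length I = n}" using finite_lists_length_eq[OF fV] .
  ultimately show ?thesis by (meson finite_surj)
qed

lemma in_diffs:
  "respects_graph V E I \<Longrightarrow> length I = n \<Longrightarrow> real (A I) - real (B I) \<in> diffs A B n V E"
  by (auto simp: diffs_def)

lemma MaxAB_ge:
  "finite V \<Longrightarrow> respects_graph V E I \<Longrightarrow> length I = n
    \<Longrightarrow> real (A I) - real (B I) \<le> MaxAB A B n V E"
  unfolding MaxAB_def using finite_diffs in_diffs by (metis Max_ge)

lemma MaxAB_le:
  assumes "finite V" "v \<in> V" "\<And>I. length I = n \<Longrightarrow> real (A I) - real (B I) \<le> c"
  shows "MaxAB A B n V E \<le> c"
proof -
  have "diffs A B n V E \<noteq> {}"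
    using in_diffs[OF respects_graph_replicate[OF assms(2)]] by fastforce
  then show ?thesis
    using assms finite_diffs[OF assms(1)] by (auto simp: MaxAB_def diffs_def Max_le_iff)
qed

lemma MinAB_eq_0:
  assumes "finite V" "v \<in> V" "\<And>I. B I \<le> A I" "A (replicate n v) = B (replicate n v)"
  shows "MinAB A B n V E = 0"
proof -
  have "real (A (replicate n v)) - real (B (replicate n v)) \<in> diffs A B n V E"
    by (rule in_diffs[OF respects_graph_replicate[OF assms(2)]]) simp
  then have "0 \<in> diffs A B n V E" using assms(4) by simp
  moreover have "\<forall>x\<in>diffs A B n V E. 0 \<le> x" using assms(3) by (auto simp: diffs_def)
  ultimately show ?thesis unfolding MinAB_def using finite_diffs[OF assms(1)] by (metis Min_eqI)
qed

lemma limsup_ratio_le: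
  assumes "\<And>n. a n \<le> L * real n + C"
  shows "limsup (\<lambda>n. ereal (a n / real n)) \<le> ereal L"
proof -
  have "limsup (\<lambda>n. ereal (a n / real n)) \<le> limsup (\<lambda>n. ereal (L + C / real n))"
  proof (intro Limsup_mono eventually_sequentiallyI[of 1])
    fix n :: nat assume "1 \<le> n"
    then have "a n / real n \<le> (L * real n + C) / real n"
      using assms by (intro divide_right_mono) auto
    also have "\<dots> = L + C / real n" using \<open>1 \<le> n\<close> by (simp add: field_simps)
    finally show "ereal (a n / real n) \<le> ereal (L + C / real n)" by simp
  qed
  also have "\<dots> = ereal L"
    by (intro lim_imp_Limsup) (auto intro!: tendsto_eq_intros lim_inverse_n')
  finally show ?thesis .
qed

lemma limsup_ratio_ge:
  assumes "\<And>n. n \<ge> N \<Longrightarrow> L * real n - C \<le> a n"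
  shows "ereal L \<le> limsup (\<lambda>n. ereal (a n / real n))"
proof -
  have "limsup (\<lambda>n. ereal (L - C / real n)) \<le> limsup (\<lambda>n. ereal (a n / real n))"
  proof (intro Limsup_mono eventually_sequentiallyI[of "max N 1"])
    fix n :: nat assume "max N 1 \<le> n"
    then have n: "n \<ge> N" "n \<ge> 1" by auto
    have "L - C / real n = (L * real n - C) / real n" using n by (simp add: field_simps)
    also have "\<dots> \<le> a n / real n" using assms[OF n(1)] n by (intro divide_right_mono) auto
    finally show "ereal (L - C / real n) \<le> ereal (a n / real n)" by simp
  qed
  moreover have "limsup (\<lambda>n. ereal (L - C / real n)) = ereal L"
    by (intro lim_imp_Limsup) (auto intro!: tendsto_eq_intros lim_inverse_n')
  ultimately show ?thesis by simp
qed

lemma MinG_FWF_FIFO: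
  assumes "1 \<le> k" "finite V" "v \<in> V"
  shows "MinG (FWF k) (FIFO k) V E = 0"
proof -
  have "MinAB (FWF k) (FIFO k) n V E = 0" for n
    using assms FIFO_le_FWF by (intro MinAB_eq_0) (auto simp: FWF_replicate FIFO_replicate)
  then show ?thesis unfolding MinG_def by (simp add: Liminf_const zero_ereal_def)
qed

lemma MaxG_FWF_FIFO_le:
  assumes "1 \<le> k" "finite V" "v \<in> V"
  shows "MaxG (FWF k) (FIFO k) V E \<le> ereal (1 - 1 / real k)"
  unfolding MaxG_def
  using assms FWF_minus_FIFO_le by (intro limsup_ratio_le MaxAB_le) auto

lemma MaxG_FWF_FIFO_nonneg:
  assumes "1 \<le> k" "finite V" "v \<in> V"
  shows "0 \<le> MaxG (FWF k) (FIFO k) V E"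
proof -
  have "0 * real n - 0 \<le> MaxAB (FWF k) (FIFO k) n V E" for n
  proof -
    have "real (FWF k (replicate n v)) - real (FIFO k (replicate n v)) \<le> MaxAB (FWF k) (FIFO k) n V E"
      by (rule MaxAB_ge[OF assms(2) respects_graph_replicate[OF assms(3)]]) simp
    then show ?thesis by (simp add: FWF_replicate[OF assms(1)] FIFO_replicate[OF assms(1)])
  qed
  then have "ereal 0 \<le> MaxG (FWF k) (FIFO k) V E"
    unfolding MaxG_def by (intro limsup_ratio_ge[where N=0])
  then show ?thesis by (simp add: zero_ereal_def)
qed

fun unit_walk :: "nat list \<Rightarrow> bool" where
  "unit_walk (x # y # zs) = ((y = Suc x \<or> x = Suc y) \<and> unit_walk (y # zs))"
| "unit_walk _ = True"

lemma unit_walk_join: "unit_walk (xs @ [a]) \<Longrightarrow> unit_walk (a # ys) \<Longrightarrow> unit_walk (xs @ a # ys)"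
proof (induction xs)
  case Nil then show ?case by simp
next
  case (Cons x xs)
  then show ?case by (cases xs) auto
qed

lemma unit_walk_append:
  "unit_walk xs \<Longrightarrow> xs \<noteq> [] \<Longrightarrow> unit_walk (last xs # ys) \<Longrightarrow> unit_walk (xs @ ys)"
proof -
  assume a: "unit_walk xs" "xs \<noteq> []" "unit_walk (last xs # ys)"
  have e: "xs = butlast xs @ [last xs]" using a by simp
  have "unit_walk (butlast xs @ last xs # ys)" using unit_walk_join[of "butlast xs" "last xs" ys] a e by simp
  then show ?thesis using e by (metis append.assoc append_Cons append_Nil)
qed

lemma unit_walk_snoc:
  "unit_walk xs \<Longrightarrow> xs \<noteq> [] \<Longrightarrow> y = Suc (last xs) \<or> last xs = Suc y \<Longrightarrow> unit_walk (xs @ [y])"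
  by (rule unit_walk_append) auto

lemma unit_walk_rev: "unit_walk xs \<Longrightarrow> unit_walk (rev xs)"
proof (induction xs rule: unit_walk.induct)
  case (1 x y zs)
  have "unit_walk (rev (y # zs))" using 1 by simp
  then have "unit_walk (rev (y # zs) @ [x])" using 1 by (intro unit_walk_snoc) auto
  then show ?case by simp
qed auto

lemma unit_walk_map_upt: "(\<And>t. g (Suc t) = Suc (g t) \<or> g t = Suc (g (Suc t))) \<Longrightarrow> unit_walk (map g [a..<b])"
proof (induction b)
  case 0 then show ?case by simp
next
  case (Suc b)
  show ?case
  proof (cases "a < b")
    case True
    then have "map g [a..<Suc b] = map g [a..<b] @ [g b]" by simp
    moreover have "unit_walk (map g [a..<b] @ [g b])"
    proof (rule unit_walk_snoc)
      show "unit_walk (map g [a..<b])" using Suc by simp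
      show "map g [a..<b] \<noteq> []" using True by simp
      have l: "last (map g [a..<b]) = g (b - 1)" using True by (simp add: last_map last_upt)
      have "b = Suc (b - 1)" using True by simp
      then show "g b = Suc (last (map g [a..<b])) \<or> last (map g [a..<b]) = Suc (g b)"
        using Suc.prems[of "b - 1"] l by metis
    qed
    ultimately show ?thesis by simp
  next
    case False
    then show ?thesis by (cases "a = b") auto
  qed
qed

lemma unit_walk_upt: "unit_walk [a..<b]"
  using unit_walk_map_upt[of id a b] by simp

lemma unit_walk_nth:
  "unit_walk xs \<Longrightarrow> Suc i < length xs \<Longrightarrow> xs ! Suc i = Suc (xs ! i) \<or> xs ! i = Suc (xs ! Suc i)"
proof (induction xs arbitrary: i rule: unit_walk.induct)
  case (1 x y zs)
  then show ?case by (cases i) auto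
qed auto

lemma respects_graph_map_path:
  assumes "length p = Suc k" "set p \<subseteq> V" "\<And>i. Suc i < length p \<Longrightarrow> E (p ! i) (p ! Suc i)"
    "\<And>x y. E x y \<Longrightarrow> E y x" "unit_walk xs" "set xs \<subseteq> {0..k}"
  shows "respects_graph V E (map ((!) p) xs)"
  unfolding respects_graph_def
proof (intro conjI allI impI)
  show "set (map ((!) p) xs) \<subseteq> V"
  proof
    fix x assume "x \<in> set (map ((!) p) xs)"
    then obtain y where "y \<in> set xs" "x = p ! y" by auto
    then have "y < length p" using assms(1,6) by auto
    then show "x \<in> V" using assms(2) \<open>x = p ! y\<close> nth_mem by blast
  qed
next
  fix i assume i: "Suc i < length (map ((!) p) xs)"
  have lt: "xs ! Suc i \<le> k" "xs ! i \<le> k" using i assms(6) by (auto simp: subset_iff)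
  from unit_walk_nth[OF assms(5)] i consider "xs ! Suc i = Suc (xs ! i)" | "xs ! i = Suc (xs ! Suc i)" by auto
  then show "map ((!) p) xs ! i = map ((!) p) xs ! Suc i \<or> E (map ((!) p) xs ! i) (map ((!) p) xs ! Suc i)"
  proof cases
    case 1
    have "E (p ! (xs ! i)) (p ! Suc (xs ! i))" using lt 1 assms(1) by (intro assms(3)) simp
    then show ?thesis using i 1 by simp
  next
    case 2
    have "E (p ! (xs ! Suc i)) (p ! Suc (xs ! Suc i))" using lt 2 assms(1) by (intro assms(3)) simp
    then have "E (p ! (xs ! i)) (p ! (xs ! Suc i))" using 2 assms(4) by metis
    then show ?thesis using i by simp
  qed
qed

lemma fwf_faults_map:
  "inj_on f (C \<union> set rs) \<Longrightarrow> finite C \<Longrightarrow> fwf_faults k (f ` C) (map f rs) = fwf_faults k C rs"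
proof (induction rs arbitrary: C)
  case Nil then show ?case by simp
next
  case (Cons r rs)
  have eq: "(f r \<in> f ` C) = (r \<in> C)" using Cons.prems by (auto simp: inj_on_def)
  have cd: "card (f ` C) = card C" using Cons.prems by (intro card_image) (auto intro: inj_on_subset)
  show ?case
  proof (cases "r \<in> C")
    case True then show ?thesis using Cons eq by (auto intro: inj_on_subset)
  next
    case False
    show ?thesis
    proof (cases "card C < k")
      case True
      have "fwf_faults k (f ` insert r C) (map f rs) = fwf_faults k (insert r C) rs"
        using Cons.prems by (intro Cons.IH) (auto intro: inj_on_subset)
      then show ?thesis using False True eq cd by simp
    next
      case F2: False
      have "fwf_faults k (f ` {r}) (map f rs) = fwf_faults k {r} rs"
        using Cons.prems by (intro Cons.IH) (auto intro: inj_on_subset)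
      then show ?thesis using False F2 eq cd by simp
    qed
  qed
qed

lemma fifo_faults_map:
  "inj_on f (set q \<union> set rs) \<Longrightarrow> fifo_faults k (map f q) (map f rs) = fifo_faults k q rs"
proof (induction rs arbitrary: q)
  case Nil then show ?case by simp
next
  case (Cons r rs)
  have eq: "(f r \<in> set (map f q)) = (r \<in> set q)" using Cons.prems by (auto simp: inj_on_def)
  show ?case
  proof (cases "r \<in> set q")
    case True then show ?thesis using Cons eq by (auto intro: inj_on_subset)
  next
    case False
    have m: "map f (if length q < k then q @ [r] else tl q @ [r]) =
      (if length (map f q) < k then map f q @ [f r] else tl (map f q) @ [f r])" by (simp add: map_tl)
    have "fifo_faults k (map f (if length q < k then q @ [r] else tl q @ [r])) (map f rs)
        = fifo_faults k (if length q < k then q @ [r] else tl q @ [r]) rs"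
    proof (intro Cons.IH)
      have "set (if length q < k then q @ [r] else tl q @ [r]) \<union> set rs \<subseteq> set q \<union> set (r # rs)"
        by (cases q) auto
      then show "inj_on f (set (if length q < k then q @ [r] else tl q @ [r]) \<union> set rs)"
        using Cons.prems by (rule inj_on_subset[rotated])
    qed
    then show ?thesis using False eq m by simp
  qed
qed

lemma FWF_map_nth:
  "distinct p \<Longrightarrow> set J \<subseteq> {0..<length p} \<Longrightarrow> FWF k (map ((!) p) J) = fwf_faults k {} J"
proof -
  assume d: "distinct p" and s: "set J \<subseteq> {0..<length p}"
  have i: "inj_on ((!) p) ({} \<union> set J)" using s by (intro inj_on_nth d) auto
  show ?thesis using fwf_faults_map[OF i] by (simp add: FWF_def)
qed

lemma FIFO_map_nth:
  "distinct p \<Longrightarrow> set J \<subseteq> {0..<length p} \<Longrightarrow> FIFO k (map ((!) p) J) = fifo_faults k [] J"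
proof -
  assume d: "distinct p" and s: "set J \<subseteq> {0..<length p}"
  have i: "inj_on ((!) p) (set [] \<union> set J)" using s by (intro inj_on_nth d) auto
  show ?thesis using fifo_faults_map[OF i, of k] by (simp add: FIFO_def)
qed

lemma map_upt_shift: "map g [d + a..<d + b] = map (\<lambda>t. g (d + t)) [a..<b]"
  by (rule nth_equalityI) (auto simp: ac_simps)

lemma upt_split: "a \<le> b \<Longrightarrow> b \<le> c \<Longrightarrow> [a..<c] = [a..<b] @ [b..<c]"
  using upt_add_eq_append[of a b "c - b"] by simp

lemma upt_split3: "t0 \<le> t1 \<Longrightarrow> t1 < e \<Longrightarrow> [t0..<e] = [t0..<t1] @ t1 # [Suc t1..<e]"
proof -
  assume a: "t0 \<le> t1" "t1 < e"
  have "[t0..<e] = [t0..<t1] @ [t1..<e]" using upt_add_eq_append[of t0 t1 "e - t1"] a by simp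
  then show ?thesis using upt_conv_Cons[of t1 e] a by simp
qed

section \<open>The bouncing walk\<close>

text \<open>Position at time \<open>t\<close> of the walk \<open>0, 1, \<dots>, k, k - 1, \<dots>, 1, 0, 1, \<dots>\<close>
  on the path.\<close>
definition bounce :: "nat \<Rightarrow> nat \<Rightarrow> nat" where
  "bounce k t = (let r = t mod (2*k) in min r (2*k - r))"

lemma bounce_block: "1 \<le> k \<Longrightarrow> r \<le> 2*k \<Longrightarrow> bounce k (2*k*j + r) = min r (2*k - r)"
proof (cases "r = 2*k")
  case True
  assume "1 \<le> k"
  have "2*k*j + r = 2*k*(Suc j)" using True by simp
  then show ?thesis using True by (simp add: bounce_def)
next
  case False
  assume "1 \<le> k" "r \<le> 2*k"
  then have "(2*k*j + r) mod (2*k) = r" using False by simp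
  then show ?thesis by (simp add: bounce_def)
qed

lemma bounce_before_block:
  "1 \<le> k \<Longrightarrow> 1 \<le> j \<Longrightarrow> d \<le> 2*k \<Longrightarrow> bounce k (2*k*j - d) = min d (2*k - d)"
proof -
  assume a: "1 \<le> k" "1 \<le> j" "d \<le> 2*k"
  obtain j' where j: "j = Suc j'" using a by (cases j) auto
  have "2*k*j - d = 2*k*j' + (2*k - d)" using a j by (simp add: algebra_simps)
  then show ?thesis using bounce_block[OF a(1), of "2*k - d" j'] a by simp
qed

lemma bounce_le: "1 \<le> k \<Longrightarrow> bounce k t \<le> k"
  by (simp add: bounce_def Let_def)

lemma bounce_periodic: "bounce k (t + 2*k*j) = bounce k t"
  by (simp add: bounce_def)

lemma bounce_Suc: assumes "1 \<le> k" shows "bounce k (Suc t) = Suc (bounce k t) \<or> bounce k t = Suc (bounce k (Suc t))"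
proof -
  define r where "r = t mod (2*k)"
  have r: "r < 2*k" using assms by (simp add: r_def)
  have t: "t = 2*k*(t div (2*k)) + r" by (simp add: r_def)
  show ?thesis
  proof (cases "Suc r = 2*k")
    case True
    have "Suc t = 2*k*(Suc (t div (2*k)))" using t True by simp
    then have "bounce k (Suc t) = 0" by (simp add: bounce_def)
    moreover have "bounce k t = 1" using bounce_block[OF assms, of r "t div (2*k)"] r t True assms by (simp add: min_def, arith)
    ultimately show ?thesis by simp
  next
    case False
    have "Suc t = 2*k*(t div (2*k)) + Suc r" using t by simp
    then have a: "bounce k (Suc t) = min (Suc r) (2*k - Suc r)" using bounce_block[OF assms, of "Suc r" "t div (2*k)"] r False by simp
    have b: "bounce k t = min r (2*k - r)" using bounce_block[OF assms, of r "t div (2*k)"] r t by simp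
    show ?thesis using a b r False by (simp add: min_def) presburger
  qed
qed

lemma bounce_ascending0: "1 \<le> k \<Longrightarrow> t \<le> k \<Longrightarrow> bounce k t = t"
  using bounce_block[of k t 0] by simp

lemma bounce_descending0: "1 \<le> k \<Longrightarrow> k \<le> t \<Longrightarrow> t \<le> 2*k \<Longrightarrow> bounce k t = 2*k - t"
  using bounce_block[of k t 0] by simp

lemma bounce_ascending: "1 \<le> k \<Longrightarrow> d \<le> k \<Longrightarrow> bounce k (2*k*j + d) = d"
  using bounce_block[of k d j] by simp

lemma bounce_descending: "1 \<le> k \<Longrightarrow> d \<le> k \<Longrightarrow> bounce k (2*k*j + (2*k - d)) = d"
  using bounce_block[of k "2*k - d" j] by simp

lemma bounce_period_split: "1 \<le> k \<Longrightarrow> map (bounce k) [0..<2*k] = [0..<Suc k] @ map (bounce k) [Suc k..<2*k]"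
proof -
  assume k: "1 \<le> k"
  have "[0..<2*k] = [0..<Suc k] @ [Suc k..<2*k]" using k by (intro upt_split) auto
  moreover have "map (bounce k) [0..<Suc k] = [0..<Suc k]"
    by (rule nth_equalityI) (simp_all add: bounce_ascending0[OF k] del: upt_Suc)
  ultimately show ?thesis by simp
qed

lemma set_bounce_descent: "1 \<le> k \<Longrightarrow> set (map (bounce k) [Suc k..<2*k]) = {1..<k}"
proof -
  assume k: "1 \<le> k"
  show ?thesis
  proof
    show "set (map (bounce k) [Suc k..<2*k]) \<subseteq> {1..<k}"
    proof
      fix x assume "x \<in> set (map (bounce k) [Suc k..<2*k])"
      then obtain t where t: "Suc k \<le> t" "t < 2*k" "x = bounce k t" by auto
      then have "x = 2*k - t" using bounce_descending0[OF k, of t] by simp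
      then show "x \<in> {1..<k}" using t by auto
    qed
    show "{1..<k} \<subseteq> set (map (bounce k) [Suc k..<2*k])"
    proof
      fix x assume x: "x \<in> {1..<k}"
      have "bounce k (2*k - x) = x" using x bounce_descending0[OF k, of "2*k - x"] by auto
      moreover have "2*k - x \<in> {Suc k..<2*k}" using x by auto
      ultimately show "x \<in> set (map (bounce k) [Suc k..<2*k])" unfolding set_map
        by (intro image_eqI[where x="2*k - x"]) auto
    qed
  qed
qed

lemma map_bounce_shift: "map (bounce k) [a + 2*k*j..<b + 2*k*j] = map (bounce k) [a..<b]"
proof -
  have "map (bounce k) [2*k*j + a..<2*k*j + b] = map (\<lambda>t. bounce k (2*k*j + t)) [a..<b]"
    by (rule map_upt_shift)
  then show ?thesis using bounce_periodic[of k _ j] by (simp add: add.commute)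
qed

lemma bounce_period_shift: "map (bounce k) [2*k*j..<2*k*j + 2*k] = map (bounce k) [0..<2*k]"
  using map_bounce_shift[of k 0 j "2*k"] by (simp add: add.commute)

lemma fwf_cache_cases:
  "fwf_cache k C xs = C \<union> set xs \<or> (\<exists>j<length xs. fwf_cache k C xs = set (drop j xs))"
proof (induction xs arbitrary: C)
  case (Cons x xs)
  obtain C' where C': "fwf_cache k C (x # xs) = fwf_cache k C' xs"
    "C' \<union> set xs = C \<union> set (x # xs) \<or> C' = {x}"
  proof (cases "x \<in> C")
    case True
    then show ?thesis using that[of C] by (simp add: insert_absorb)
  next
    case False
    then show ?thesis using that[of "if card C < k then insert x C else {x}"] by simp
  qed
  from Cons.IH[of C'] show ?case
  proof
    assume cache: "fwf_cache k C' xs = C' \<union> set xs"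
    from C'(2) show ?case
    proof
      assume "C' = {x}"
      then have "fwf_cache k C (x # xs) = set (drop 0 (x # xs))" using C'(1) cache by simp
      then show ?case by blast
    qed (use C'(1) cache in simp)
  next
    assume "\<exists>j<length xs. fwf_cache k C' xs = set (drop j xs)"
    then obtain j where "j < length xs" "fwf_cache k C' xs = set (drop j xs)" by blast
    then show ?case using C'(1) by (intro disjI2 exI[of _ "Suc j"]) auto
  qed
qed simp

lemma fwf_no_flush: "finite C \<Longrightarrow> card (C \<union> set xs) \<le> k \<Longrightarrow>
   fwf_cache k C xs = C \<union> set xs \<and> fwf_faults k C xs = card (set xs - C)"
proof (induction xs arbitrary: C)
  case Nil then show ?case by simp
next
  case (Cons x xs)
  show ?case
  proof (cases "x \<in> C")
    case True
    have "set (x # xs) - C = set xs - C" using True by auto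
    then show ?thesis using Cons True by (simp add: insert_absorb)
  next
    case False
    have "card (insert x C) \<le> card (C \<union> set (x # xs))" using Cons.prems by (intro card_mono) auto
    then have ck: "card C < k" using Cons.prems False by simp
    have e: "insert x C \<union> set xs = C \<union> set (x # xs)" by auto
    have IH: "fwf_cache k (insert x C) xs = insert x C \<union> set xs \<and>
      fwf_faults k (insert x C) xs = card (set xs - insert x C)"
      using Cons.prems e by (intro Cons.IH) auto
    have "set (x # xs) - C = insert x (set xs - insert x C)" using False by auto
    then have "card (set (x # xs) - C) = Suc (card (set xs - insert x C))" by simp
    then show ?thesis using IH False ck e by simp
  qed
qed

lemma fwf_cache_bounce_period:
  assumes k: "1 \<le> k" and C: "finite C" "card C \<le> k"
  shows "fwf_cache k C (map (bounce k) [0..<2*k]) = {1..k}"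
proof -
  let ?D = "map (bounce k) [Suc k..<2*k]"
  define C1 where "C1 = fwf_cache k C [0..<Suc k]"
  have inv0: "finite C1 \<and> card C1 \<le> k" unfolding C1_def by (rule fwf_cache_card_le[OF k C])
  have inv: "finite C1" "card C1 \<le> k" using inv0 by blast+
  from fwf_cache_cases[of k C "[0..<Suc k]"] obtain j where j: "j < Suc k" "C1 = {j..k}"
  proof
    assume h: "fwf_cache k C [0..<Suc k] = C \<union> set [0..<Suc k]"
    have "set [0..<Suc k] \<subseteq> C1" unfolding C1_def h by (rule Un_upper2)
    then have "card (set [0..<Suc k]) \<le> card C1" by (rule card_mono[OF inv(1)])
    moreover have "card (set [0..<Suc k]) = Suc k" by (simp only: distinct_card distinct_upt length_upt)
    ultimately show ?thesis using inv(2) by linarith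
  next
    assume "\<exists>j<length [0..<Suc k]. fwf_cache k C [0..<Suc k] = set (drop j [0..<Suc k])"
    then obtain j where j: "j < length [0..<Suc k]" "fwf_cache k C [0..<Suc k] = set (drop j [0..<Suc k])"
      by blast
    have "set (drop j [0..<Suc k]) = {j..k}" by (simp del: upt_Suc add: atLeastLessThanSuc_atLeastAtMost)
    then have "C1 = {j..k}" using j(2) unfolding C1_def by simp
    moreover have "j < Suc k" using j(1) by simp
    ultimately show ?thesis by (rule that[rotated])
  qed
  have j1: "1 \<le> j"
  proof (rule ccontr)
    assume "\<not> 1 \<le> j" then have "C1 = {0..k}" using j by simp
    then show False using inv by simp
  qed
  have U: "C1 \<union> set ?D = {1..k}" using j j1 set_bounce_descent[OF k] by auto
  have cu: "card (C1 \<union> set ?D) \<le> k" unfolding U by simp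
  have n: "fwf_cache k C1 ?D = C1 \<union> set ?D" using fwf_no_flush[OF inv(1) cu] by blast
  have e: "fwf_cache k C (map (bounce k) [0..<2*k]) = fwf_cache k C1 ?D"
    unfolding C1_def bounce_period_split[OF k] fwf_cache_append ..
  show ?thesis using e n U by simp
qed

lemma fwf_faults_bounce_period:
  assumes k: "1 \<le> k"
  shows "fwf_faults k {1..k} (map (bounce k) [0..<2*k]) = 2*k"
proof -
  let ?D = "map (bounce k) [Suc k..<2*k]"
  have A: "[0..<Suc k] = [0] @ [1..<k] @ [k]" using k by (simp add: upt_conv_Cons)
  have f1: "fwf_faults k {1..k} [0] = 1" "fwf_cache k {1..k} [0] = {0}" by auto
  have u2: "{0} \<union> set [1..<k] = {0..<k}" using k by auto
  have n2': "fwf_cache k {0} [1..<k] = {0} \<union> set [1..<k] \<and> fwf_faults k {0} [1..<k] = card (set [1..<k] - {0})"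
    by (rule fwf_no_flush) (use u2 in simp_all)
  have n2: "fwf_cache k {0} [1..<k] = {0..<k} \<and> fwf_faults k {0} [1..<k] = card (set [1..<k] - {0})"
    using n2' u2 by simp
  have c2: "card (set [1..<k] - {0}) = k - 1" by simp
  have f3: "fwf_faults k {0..<k} [k] = 1" "fwf_cache k {0..<k} [k] = {k}" by auto
  have u4: "{k} \<union> set ?D = {1..k}" using set_bounce_descent[OF k] k by auto
  have n4: "fwf_cache k {k} ?D = {k} \<union> set ?D \<and> fwf_faults k {k} ?D = card (set ?D - {k})"
    by (rule fwf_no_flush) (use u4 in simp_all)
  have c4: "card (set ?D - {k}) = k - 1" using set_bounce_descent[OF k] by simp
  have L: "map (bounce k) [0..<2*k] = [0] @ [1..<k] @ [k] @ ?D" using bounce_period_split[OF k] A by simp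
  have "fwf_faults k {1..k} ([0] @ [1..<k] @ [k] @ ?D) = 1 + ((k - 1) + (1 + (k - 1)))"
    using f1 n2 c2 f3 n4 c4 by (simp only: fwf_faults_append fwf_cache_append)
  then show ?thesis using L k by simp
qed

lemma fwf_faults_bounce_periods:
  assumes k: "1 \<le> k"
  shows "fwf_faults k {1..k} (map (bounce k) [2*k*j..<2*k*j + 2*k*P]) = 2*k*P
       \<and> fwf_cache k {1..k} (map (bounce k) [2*k*j..<2*k*j + 2*k*P]) = {1..k}"
proof (induction P arbitrary: j)
  case 0 then show ?case by simp
next
  case (Suc P)
  have sp: "[2*k*j..<2*k*j + 2*k*Suc P] = [2*k*j..<2*k*j + 2*k] @ [2*k*Suc j..<2*k*Suc j + 2*k*P]"
  proof -
    have e1: "2*k*Suc j = 2*k*j + 2*k" by simp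
    have e2: "2*k*j + 2*k + 2*k*P = 2*k*j + 2*k*Suc P" by (simp add: algebra_simps)
    have "[2*k*j..<2*k*j + 2*k*Suc P] = [2*k*j..<2*k*j + 2*k] @ [2*k*j + 2*k..<2*k*j + 2*k*Suc P]"
      by (rule upt_split) auto
    then show ?thesis by (simp only: e1 e2)
  qed
  have p: "fwf_faults k {1..k} (map (bounce k) [2*k*j..<2*k*j + 2*k]) = 2*k"
          "fwf_cache k {1..k} (map (bounce k) [2*k*j..<2*k*j + 2*k]) = {1..k}"
    using bounce_period_shift fwf_faults_bounce_period[OF k] fwf_cache_bounce_period[OF k] by auto
  show ?case using Suc.IH[of "Suc j"] p sp by (simp add: fwf_faults_append fwf_cache_append algebra_simps)
qed

lemma fwf_faults_bounce_ge:
  assumes k: "1 \<le> k" and C: "finite C" "card C \<le> k"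
  shows "L \<le> fwf_faults k C (map (bounce k) [2*k*j..<2*k*j + L]) + 4*k"
proof (cases "4*k \<le> L")
  case True
  define P where "P = L div (2*k) - 2"
  have "4*k div (2*k) \<le> L div (2*k)" using True by (rule div_le_mono)
  then have P: "Suc (Suc P) = L div (2*k)" unfolding P_def using k by simp
  have "L = 2*k*(L div (2*k)) + L mod (2*k)" by simp
  moreover have "L mod (2*k) < 2*k" using k by simp
  ultimately have L: "2*k*Suc (Suc P) \<le> L" "L < 2*k*Suc (Suc P) + 2*k"
    unfolding P by linarith+
  have first: "fwf_cache k C (map (bounce k) [2*k*j..<2*k*j + 2*k]) = {1..k}"
    using bounce_period_shift fwf_cache_bounce_period[OF k C] by auto
  have "[2*k*j..<2*k*j + L] = [2*k*j..<2*k*j + 2*k] @ [2*k*Suc j..<2*k*Suc j + 2*k*Suc P]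
      @ [2*k*j + 2*k*Suc (Suc P)..<2*k*j + L]"
    using L upt_split[of "2*k*j" "2*k*j + 2*k" "2*k*j + L"]
      upt_split[of "2*k*Suc j" "2*k*Suc j + 2*k*Suc P" "2*k*j + L"] by (simp add: algebra_simps)
  then have "2*k*Suc P \<le> fwf_faults k C (map (bounce k) [2*k*j..<2*k*j + L])"
    using fwf_faults_bounce_periods[OF k, of "Suc j" "Suc P"] first by (simp add: fwf_faults_append)
  then show ?thesis using L by simp
qed simp

section \<open>FIFO with a single missing page\<close>

text \<open>While FIFO holds all but one page \<open>a\<close> of \<open>k + 1\<close> pages and evicts them in a
  fixed cyclic order \<open>f\<close>, it faults exactly on requests to \<open>a\<close>, after which \<open>f a\<close>
  is the missing page, the hole.\<close>
fun hole_faults :: "(nat \<Rightarrow> nat) \<Rightarrow> nat \<Rightarrow> nat list \<Rightarrow> nat" where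
  "hole_faults f a [] = 0"
| "hole_faults f a (r # rs) = (if r = a then Suc (hole_faults f (f a) rs) else hole_faults f a rs)"

fun hole_final :: "(nat \<Rightarrow> nat) \<Rightarrow> nat \<Rightarrow> nat list \<Rightarrow> nat" where
  "hole_final f a [] = a"
| "hole_final f a (r # rs) = (if r = a then hole_final f (f a) rs else hole_final f a rs)"

lemma hole_faults_append: "hole_faults f a (xs @ ys) = hole_faults f a xs + hole_faults f (hole_final f a xs) ys"
  by (induction xs arbitrary: a) auto

lemma hole_final_append: "hole_final f a (xs @ ys) = hole_final f (hole_final f a xs) ys"
  by (induction xs arbitrary: a) auto

lemma hole_faults_le_length: "hole_faults f a xs \<le> length xs"
  by (induction xs arbitrary: a) (auto intro: le_SucI)

lemma hole_faults_append_le: "hole_faults f a (xs @ ys) \<le> length xs + hole_faults f (hole_final f a xs) ys"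
  using hole_faults_append[of f a xs ys] hole_faults_le_length[of f a xs] by simp

lemma hole_untouched: "a \<notin> set xs \<Longrightarrow> hole_faults f a xs = 0 \<and> hole_final f a xs = a"
  by (induction xs) auto

lemma hole_first_hit:
  assumes "t0 \<le> t1" "t1 < e" "\<And>t. t0 \<le> t \<Longrightarrow> t < t1 \<Longrightarrow> g t \<noteq> a" "g t1 = a"
  shows "hole_faults f a (map g [t0..<e]) = Suc (hole_faults f (f a) (map g [Suc t1..<e]))
       \<and> hole_final f a (map g [t0..<e]) = hole_final f (f a) (map g [Suc t1..<e])"
proof -
  have na: "a \<notin> set (map g [t0..<t1])"
  proof
    assume "a \<in> set (map g [t0..<t1])"
    then obtain t where "t0 \<le> t" "t < t1" "g t = a" by auto
    then show False using assms(3) by blast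
  qed
  show ?thesis using upt_split3[OF assms(1,2)] hole_untouched[OF na, of f] assms(4)
    by (simp add: hole_faults_append hole_final_append)
qed

lemma hole_single_hit:
  assumes "t0 \<le> t1" "\<And>t. t0 \<le> t \<Longrightarrow> t < t1 \<Longrightarrow> g t \<noteq> x" "g t1 = x"
  shows "hole_faults f x (map g [t0..<Suc t1]) = 1 \<and> hole_final f x (map g [t0..<Suc t1]) = f x"
  using hole_first_hit[of t0 t1 "Suc t1" g x f] assms by simp

lemma hole_run_split:
  assumes "t0 \<le> t1" "t1 \<le> t2"
  shows "hole_faults f a (map g [t0..<t2])
      = hole_faults f a (map g [t0..<t1]) + hole_faults f (hole_final f a (map g [t0..<t1])) (map g [t1..<t2])
    \<and> hole_final f a (map g [t0..<t2]) = hole_final f (hole_final f a (map g [t0..<t1])) (map g [t1..<t2])"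
  using upt_split[OF assms] by (simp add: hole_faults_append hole_final_append)

definition cyclic_succ :: "(nat \<Rightarrow> nat) \<Rightarrow> nat list \<Rightarrow> bool" where
  "cyclic_succ f L \<longleftrightarrow> (\<forall>i<length L. f (L ! i) = L ! (Suc i mod length L))"

lemma cyclic_succ_rotate1: "cyclic_succ f L \<Longrightarrow> cyclic_succ f (rotate1 L)"
  unfolding cyclic_succ_def
proof (intro allI impI)
  fix i assume c: "\<forall>i<length L. f (L ! i) = L ! (Suc i mod length L)" and i: "i < length (rotate1 L)"
  have n: "length L > 0" using i by (cases L) auto
  have "f (rotate1 L ! i) = f (L ! (Suc i mod length L))" using i by (simp add: nth_rotate1)
  also have "\<dots> = L ! (Suc (Suc i mod length L) mod length L)" using c n by simp
  also have "\<dots> = L ! (Suc (Suc i) mod length L)" by (simp add: mod_Suc_eq)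
  also have "\<dots> = rotate1 L ! (Suc i mod length L)" using n by (simp add: nth_rotate1 mod_Suc_eq)
  finally show "f (rotate1 L ! i) = rotate1 L ! (Suc i mod length (rotate1 L))" by simp
qed

lemma fifo_faults_eq_hole_faults:
  "length q = k \<Longrightarrow> 1 \<le> k \<Longrightarrow> distinct (q @ [b]) \<Longrightarrow> cyclic_succ f (q @ [b])
    \<Longrightarrow> set rs \<subseteq> set (q @ [b])
   \<Longrightarrow> fifo_faults k q rs = hole_faults f b rs"
proof (induction rs arbitrary: q b)
  case Nil then show ?case by simp
next
  case (Cons r rs)
  show ?case
  proof (cases "r \<in> set q")
    case True
    then have "r \<noteq> b" using Cons.prems by auto
    then show ?thesis using True Cons by auto
  next
    case False
    then have rb: "r = b" using Cons.prems by auto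
    have qne: "q \<noteq> []" using Cons.prems by auto
    have rot: "rotate1 (q @ [b]) = tl q @ [b] @ [hd q]" using qne by (cases q) auto
    have fb: "f b = hd q"
    proof -
      have "f ((q @ [b]) ! k) = (q @ [b]) ! (Suc k mod length (q @ [b]))"
        using Cons.prems unfolding cyclic_succ_def by auto
      then show ?thesis using Cons.prems qne by (simp add: nth_append hd_conv_nth)
    qed
    have IH: "fifo_faults k (tl q @ [b]) rs = hole_faults f (hd q) rs"
    proof (rule Cons.IH)
      show "length (tl q @ [b]) = k" using Cons.prems qne by simp
      show "distinct ((tl q @ [b]) @ [hd q])" using Cons.prems rot by (metis append_assoc distinct1_rotate)
      show "cyclic_succ f ((tl q @ [b]) @ [hd q])" using cyclic_succ_rotate1[OF Cons.prems(4)] rot by simp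
      have "set (tl q @ [b] @ [hd q]) = set (q @ [b])" using rot by (metis set_rotate1)
      then show "set rs \<subseteq> set ((tl q @ [b]) @ [hd q])" using Cons.prems by auto
    qed (rule Cons.prems(2))
    show ?thesis using False rb IH fb Cons.prems by simp
  qed
qed

section \<open>The zigzag order\<close>

definition centre :: "nat \<Rightarrow> nat" where "centre k = (k + 1) div 2"

text \<open>The vertices \<open>0, \<dots>, k\<close> of the path in the order \<open>c, c - 1, c + 1, c - 2, c + 2, \<dots>\<close>
  around the centre \<open>c\<close>; \<open>zigzag_next k\<close> is the cyclic successor in this order.\<close>
definition zigzag :: "nat \<Rightarrow> nat \<Rightarrow> nat" where
  "zigzag k j = (if even j then centre k + j div 2 else centre k - (j + 1) div 2)"

definition zigzag_next :: "nat \<Rightarrow> nat \<Rightarrow> nat" where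
  "zigzag_next k x = (if x < centre k then (if 2 * centre k - x \<le> k then 2 * centre k - x else centre k)
              else (if x + 1 \<le> 2 * centre k then 2 * centre k - 1 - x else centre k))"

lemma zigzag_next_zigzag: "j < k \<Longrightarrow> zigzag_next k (zigzag k j) = zigzag k (Suc j)"
proof (cases "even j")
  case True
  assume "j < k"
  then obtain i where i: "j = 2*i" using True by auto
  have "2*i < k" using \<open>j<k\<close> i by simp
  then show ?thesis using i by (simp add: zigzag_next_def zigzag_def centre_def)
next
  case False
  assume "j < k"
  then obtain i where i: "j = 2*i+1" using False by (metis oddE)
  have "2*i+1 < k" using \<open>j<k\<close> i by simp
  then show ?thesis using i by (simp add: zigzag_next_def zigzag_def centre_def)
qed

lemma zigzag_next_last: "1 \<le> k \<Longrightarrow> zigzag_next k (zigzag k k) = zigzag k 0"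
  by (cases "even k") (auto simp: zigzag_next_def zigzag_def centre_def elim!: evenE oddE)

lemma cyclic_succ_zigzag: "1 \<le> k \<Longrightarrow> cyclic_succ (zigzag_next k) (map (zigzag k) [0..<Suc k])"
  unfolding cyclic_succ_def
proof (intro allI impI)
  fix i assume k: "1 \<le> k" and i: "i < length (map (zigzag k) [0..<Suc k])"
  then have i': "i \<le> k" by simp
  show "zigzag_next k (map (zigzag k) [0..<Suc k] ! i) = map (zigzag k) [0..<Suc k] ! (Suc i mod length (map (zigzag k) [0..<Suc k]))"
  proof (cases "i = k")
    case True
    then show ?thesis using zigzag_next_last[OF k] by (simp del: upt_Suc)
  next
    case False
    then have "i < k" using i' by simp
    then show ?thesis using zigzag_next_zigzag[of i k] by (simp del: upt_Suc add: nth_append)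
  qed
qed

lemma set_zigzag_prefix:
  "j \<le> k \<Longrightarrow> set (map (zigzag k) [0..<Suc j]) = {centre k - Suc j div 2 .. centre k + j div 2}"
proof (induction j)
  case 0 then show ?case by (simp add: zigzag_def)
next
  case (Suc j)
  have IH: "set (map (zigzag k) [0..<Suc j]) = {centre k - Suc j div 2 .. centre k + j div 2}" using Suc by simp
  have "set (map (zigzag k) [0..<Suc (Suc j)]) = insert (zigzag k (Suc j)) (set (map (zigzag k) [0..<Suc j]))"
    by auto
  also have "\<dots> = {centre k - Suc (Suc j) div 2 .. centre k + Suc j div 2}"
    unfolding IH
  proof (cases "even j")
    case True
    have h: "Suc j div 2 = j div 2" "Suc (Suc j) div 2 = Suc (j div 2)" using True by presburger+
    have "Suc (j div 2) \<le> centre k" using Suc.prems True unfolding centre_def by presburger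
    then show "insert (zigzag k (Suc j)) {centre k - Suc j div 2..centre k + j div 2} = {centre k - Suc (Suc j) div 2..centre k + Suc j div 2}"
      using True h by (auto simp: zigzag_def)
  next
    case False
    have h: "Suc j div 2 = Suc (j div 2)" "Suc (Suc j) div 2 = Suc (j div 2)" using False by presburger+
    show "insert (zigzag k (Suc j)) {centre k - Suc j div 2..centre k + j div 2} = {centre k - Suc (Suc j) div 2..centre k + Suc j div 2}"
      using False h by (auto simp: zigzag_def)
  qed
  finally show ?case .
qed

lemma set_zigzag: "set (map (zigzag k) [0..<Suc k]) = {0..k}"
proof -
  have "centre k - Suc k div 2 = 0" "centre k + k div 2 = k" unfolding centre_def by presburger+
  then show ?thesis using set_zigzag_prefix[of k k] by simp
qed

lemma distinct_zigzag: "distinct (map (zigzag k) [0..<Suc k])"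
proof (rule card_distinct)
  have "card (set (map (zigzag k) [0..<Suc k])) = card {0..k}" by (simp only: set_zigzag)
  then show "card (set (map (zigzag k) [0..<Suc k])) = length (map (zigzag k) [0..<Suc k])" by simp
qed

lemma zigzag_Suc_neq: "Suc j \<le> k \<Longrightarrow> zigzag k j \<noteq> zigzag k (Suc j)"
  using distinct_zigzag[of k] by (auto simp: nth_eq_iff_index_eq simp del: upt_Suc
    dest: nth_eq_iff_index_eq[of "map (zigzag k) [0..<Suc k]" j "Suc j"])

lemma zigzag_le: "j \<le> k \<Longrightarrow> zigzag k j \<le> k"
proof (cases "even j")
  case True
  assume "j \<le> k"
  then have "centre k + j div 2 \<le> k" unfolding centre_def using True by presburger
  then show ?thesis using True by (simp add: zigzag_def)
next
  case False
  have "centre k \<le> k" unfolding centre_def by presburger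
  then show ?thesis using False by (simp add: zigzag_def)
qed

lemma zigzag_odd_end: "k = 2*m + 1 \<Longrightarrow> zigzag k (k - 1) = k \<and> zigzag k k = 0"
  by (simp add: zigzag_def centre_def)

lemma zigzag_even_end: "k = 2*m \<Longrightarrow> 1 \<le> m \<Longrightarrow> zigzag k (k - 1) = 0 \<and> zigzag k k = k"
proof -
  assume k: "k = 2*m" and m: "1 \<le> m"
  have c: "centre k = m" using k by (simp add: centre_def)
  have o: "odd (k - 1)" using k m by simp
  have "(k - 1 + 1) div 2 = m" using k m by simp
  then show ?thesis using c o k by (simp add: zigzag_def)
qed

definition steps_to :: "nat \<Rightarrow> nat \<Rightarrow> nat list" where
  "steps_to a b = (if b < a then rev [b..<a] else [Suc a..<Suc b])"

fun zigzag_walk :: "nat \<Rightarrow> nat \<Rightarrow> nat list" where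
  "zigzag_walk k 0 = [centre k]"
| "zigzag_walk k (Suc j) = zigzag_walk k j @ steps_to (zigzag k j) (zigzag k (Suc j))"

lemma steps_to_snoc:
  assumes "lo \<le> a" "a \<le> hi" "Suc b = lo \<or> b = Suc hi"
  shows "\<exists>xs. steps_to a b = xs @ [b] \<and> set xs \<subseteq> {lo..hi} \<and> b \<notin> {lo..hi}"
proof (cases "b < a")
  case True
  have "[b..<a] = b # [Suc b..<a]" using True by (simp add: upt_conv_Cons)
  then have "steps_to a b = rev [Suc b..<a] @ [b]" using True by (simp add: steps_to_def)
  then show ?thesis using assms True by (intro exI[of _ "rev [Suc b..<a]"]) auto
next
  case False
  then have ab: "a < b" using assms by auto
  have "[Suc a..<Suc b] = [Suc a..<b] @ [b]" using ab by simp
  then have "steps_to a b = [Suc a..<b] @ [b]" using False by (simp add: steps_to_def)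
  then show ?thesis using assms ab by (intro exI[of _ "[Suc a..<b]"]) auto
qed

lemma unit_walk_steps_to: "unit_walk (a # steps_to a b)"
proof (cases "b < a")
  case True
  have e: "a # rev [b..<a] = rev [b..<Suc a]" using True by simp
  have "unit_walk (rev [b..<Suc a])" by (rule unit_walk_rev[OF unit_walk_upt])
  then show ?thesis using True e by (metis steps_to_def)
next
  case False
  have e: "a # [Suc a..<Suc b] = [a..<Suc b]" using False by (simp add: upt_conv_Cons)
  show ?thesis using False e unit_walk_upt[of a "Suc b"] by (metis steps_to_def)
qed

lemma steps_to_last: "a \<noteq> b \<Longrightarrow> steps_to a b \<noteq> [] \<and> last (steps_to a b) = b"
  by (auto simp: steps_to_def last_rev hd_upt last_upt)

lemma zigzag_walk_props:
  "j \<le> k \<Longrightarrow> unit_walk (zigzag_walk k j) \<and> zigzag_walk k j \<noteq> []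
    \<and> last (zigzag_walk k j) = zigzag k j \<and> set (zigzag_walk k j) \<subseteq> {0..k}"
proof (induction j)
  case 0 then show ?case by (simp add: zigzag_def centre_def)
next
  case (Suc j)
  then have IH: "unit_walk (zigzag_walk k j)" "zigzag_walk k j \<noteq> []" "last (zigzag_walk k j) = zigzag k j"
    "set (zigzag_walk k j) \<subseteq> {0..k}" by auto
  have ne: "zigzag k j \<noteq> zigzag k (Suc j)" using zigzag_Suc_neq Suc.prems by blast
  have w: "unit_walk (zigzag_walk k (Suc j))"
    using unit_walk_append[OF IH(1,2)] IH(3) unit_walk_steps_to by simp
  have sgk: "zigzag k (Suc j) \<le> k" "zigzag k j \<le> k" using Suc.prems by (auto intro: zigzag_le)
  have "set (steps_to (zigzag k j) (zigzag k (Suc j))) \<subseteq> {0..k}" using sgk by (auto simp: steps_to_def)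
  then show ?case using w IH steps_to_last[OF ne] by auto
qed

lemma fifo_hits: "set xs \<subseteq> set q \<Longrightarrow> fifo_queue k q xs = q \<and> fifo_faults k q xs = 0"
  by (induction xs) auto

lemma fifo_queue_load: "length q < k \<Longrightarrow> set xs \<subseteq> set q \<Longrightarrow> y \<notin> set q \<Longrightarrow>
  fifo_queue k q (xs @ [y]) = q @ [y]"
  using fifo_hits[of xs q k] by (simp add: fifo_queue_append)

lemma fifo_queue_zigzag_walk: "j < k \<Longrightarrow> fifo_queue k [] (zigzag_walk k j) = map (zigzag k) [0..<Suc j]"
proof (induction j)
  case 0 then show ?case by (simp add: zigzag_def)
next
  case (Suc j)
  have IH: "fifo_queue k [] (zigzag_walk k j) = map (zigzag k) [0..<Suc j]" using Suc by simp
  let ?lo = "centre k - Suc j div 2" and ?hi = "centre k + j div 2"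
  have S: "set (map (zigzag k) [0..<Suc j]) = {?lo..?hi}" using set_zigzag_prefix[of j k] Suc.prems by simp
  have a0: "zigzag k j \<in> set (map (zigzag k) [0..<Suc j])" by simp
  have a: "zigzag k j \<in> {?lo..?hi}" using a0 unfolding S .
  have b: "Suc (zigzag k (Suc j)) = ?lo \<or> zigzag k (Suc j) = Suc ?hi"
  proof (cases "even j")
    case True
    have "Suc (j div 2) \<le> centre k" using Suc.prems True unfolding centre_def by presburger
    then show ?thesis using True by (simp add: zigzag_def; presburger)
  next
    case False then show ?thesis by (simp add: zigzag_def; presburger)
  qed
  obtain xs where xs: "steps_to (zigzag k j) (zigzag k (Suc j)) = xs @ [zigzag k (Suc j)]" "set xs \<subseteq> {?lo..?hi}"
    "zigzag k (Suc j) \<notin> {?lo..?hi}"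
    using steps_to_snoc[of ?lo "zigzag k j" ?hi "zigzag k (Suc j)"] a b by auto
  have "fifo_queue k [] (zigzag_walk k (Suc j)) = fifo_queue k (map (zigzag k) [0..<Suc j]) (xs @ [zigzag k (Suc j)])"
    using IH xs by (simp add: fifo_queue_append)
  also have "\<dots> = map (zigzag k) [0..<Suc j] @ [zigzag k (Suc j)]"
  proof (rule fifo_queue_load)
    show "length (map (zigzag k) [0..<Suc j]) < k" using Suc.prems by simp
    show "set xs \<subseteq> set (map (zigzag k) [0..<Suc j])" by (simp only: S) (rule xs(2))
    show "zigzag k (Suc j) \<notin> set (map (zigzag k) [0..<Suc j])" by (simp only: S) (rule xs(3))
  qed
  finally show ?case by simp
qed

lemma bounce_less_around_block:
  assumes k: "1 \<le> k" and "y = 0 \<or> 1 \<le> j" "y \<le> x" "x \<le> k"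
    and t: "2*k*j - y < t" "t < 2*k*j + x"
  shows "bounce k t < x"
proof (cases "2*k*j \<le> t")
  case True
  have "bounce k t = bounce k (2*k*j + (t - 2*k*j))" using True by simp
  also have "\<dots> = t - 2*k*j" using t assms(4) by (intro bounce_ascending k) simp
  finally show ?thesis using t True by simp
next
  case False
  then have "1 \<le> j" using t assms(2) by auto
  have "bounce k t = bounce k (2*k*j - (2*k*j - t))" using False by simp
  also have "\<dots> = min (2*k*j - t) (2*k - (2*k*j - t))"
    using False t assms(3,4) by (intro bounce_before_block k \<open>1 \<le> j\<close>) simp
  finally show ?thesis using t assms(3,4) by simp
qed

text \<open>One round of the bouncing walk: the missing page \<open>x\<close> is requested on the way up, at time
  \<open>B + x\<close>, and its successor \<open>z < x\<close> on the way down, at time \<open>B + 2k - z\<close>.\<close>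
lemma hole_round_trip:
  assumes k: "1 \<le> k" and B: "B = 2*k*j" and yj: "y = 0 \<or> 1 \<le> j" and yx: "y \<le> x" and xk: "x \<le> k"
    and zx: "z < x" and fx: "f x = z"
  shows "hole_faults f x (map (bounce k) [B - y + 1..<B + 2*k - z + 1]) = 2
       \<and> hole_final f x (map (bounce k) [B - y + 1..<B + 2*k - z + 1]) = f z"
proof -
  have h1: "hole_faults f x (map (bounce k) [B - y + 1..<Suc (B + x)]) = 1
      \<and> hole_final f x (map (bounce k) [B - y + 1..<Suc (B + x)]) = z"
  proof (subst fx[symmetric], rule hole_single_hit)
    show "B - y + 1 \<le> B + x" using zx by simp
    show "bounce k (B + x) = x" using bounce_ascending[OF k xk] B by simp
    fix t assume "B - y + 1 \<le> t" "t < B + x"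
    then show "bounce k t \<noteq> x" using bounce_less_around_block[OF k yj yx xk, of t] B by simp
  qed
  have h2: "hole_faults f z (map (bounce k) [Suc (B + x)..<Suc (B + 2*k - z)]) = 1
      \<and> hole_final f z (map (bounce k) [Suc (B + x)..<Suc (B + 2*k - z)]) = f z"
  proof (rule hole_single_hit)
    show "Suc (B + x) \<le> B + 2*k - z" using zx xk by simp
    have "bounce k (B + 2*k - z) = bounce k (2*k*j + (2*k - z))" using B zx xk by simp
    also have "\<dots> = z" using zx xk by (intro bounce_descending k) simp
    finally show "bounce k (B + 2*k - z) = z" .
    fix t assume t: "Suc (B + x) \<le> t" "t < B + 2*k - z"
    have "bounce k t = bounce k (2*k*j + (t - B))" using t B by simp
    also have "\<dots> = min (t - B) (2*k - (t - B))" using t zx xk by (intro bounce_block k) simp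
    finally show "bounce k t \<noteq> z" using t zx xk by (simp add: min_def; arith)
  qed
  have s: "B - y + 1 \<le> Suc (B + x)" "Suc (B + x) \<le> B + 2*k - z + 1" using zx xk by simp_all
  show ?thesis using hole_run_split[OF s, of f x "bounce k"] h1 h2 by (simp del: upt_Suc)
qed

lemma zigzag_next_odd:
  assumes "k = 2*m + 1"
  shows "centre k = m + 1" "\<And>i. i \<le> m \<Longrightarrow> zigzag_next k (m + 1 + i) = m - i"
    "\<And>i. i \<le> m \<Longrightarrow> zigzag_next k (m - i) = (if i < m then m + 2 + i else m + 1)"
  using assms by (auto simp: centre_def zigzag_next_def)

text \<open>For \<open>k = 2m + 1\<close> the missing page follows \<open>m + 1, m, m + 2, m - 1, \<dots>\<close>, two steps per
  round: in round \<open>i\<close> it is \<open>m + 1 + i\<close> on the way up and \<open>m - i\<close> on the way down.\<close>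
lemma hole_odd_rounds:
  assumes k: "k = 2*m + 1"
  shows "i \<le> m
    \<Longrightarrow> hole_faults (zigzag_next k) (centre k) (map (bounce k) [1..<2*k*(i+1) - (m - i) + 1]) = 2*(i+1)
    \<and> hole_final (zigzag_next k) (centre k) (map (bounce k) [1..<2*k*(i+1) - (m - i) + 1]) = zigzag_next k (m - i)"
proof (induction i)
  case 0
  have "hole_faults (zigzag_next k) (m + 1) (map (bounce k) [0 - 0 + 1..<0 + 2*k - m + 1]) = 2
      \<and> hole_final (zigzag_next k) (m + 1) (map (bounce k) [0 - 0 + 1..<0 + 2*k - m + 1]) = zigzag_next k m"
    using zigzag_next_odd(2)[OF k, of 0] k by (intro hole_round_trip[where j=0]) auto
  then show ?case using zigzag_next_odd(1)[OF k] k by (simp del: upt_Suc)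
next
  case (Suc i)
  define B where "B = 2*k*(i+1)"
  have im: "i < m" using Suc.prems by simp
  have IH: "hole_faults (zigzag_next k) (centre k) (map (bounce k) [1..<B - (m - i) + 1]) = 2*(i+1)
    \<and> hole_final (zigzag_next k) (centre k) (map (bounce k) [1..<B - (m - i) + 1]) = m + 2 + i"
    using Suc.IH im zigzag_next_odd(3)[OF k, of i] unfolding B_def by simp
  have E: "2*k*(Suc i + 1) - (m - Suc i) + 1 = B + 2*k - (m - Suc i) + 1" unfolding B_def
    by (simp add: algebra_simps)
  let ?R = "map (bounce k) [B - (m - i) + 1..<B + 2*k - (m - Suc i) + 1]"
  have TH: "hole_faults (zigzag_next k) (m + 2 + i) ?R = 2
      \<and> hole_final (zigzag_next k) (m + 2 + i) ?R = zigzag_next k (m - Suc i)"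
  proof -
    have "zigzag_next k (m + 2 + i) = m - Suc i" using zigzag_next_odd(2)[OF k, of "Suc i"] Suc.prems by simp
    then show ?thesis using k Suc.prems unfolding B_def
      by (intro hole_round_trip[where j="i+1"]) auto
  qed
  have s: "1 \<le> B - (m - i) + 1" "B - (m - i) + 1 \<le> B + 2*k - (m - Suc i) + 1" by simp_all
  show ?case unfolding E using hole_run_split[OF s, of "zigzag_next k" "centre k" "bounce k"] IH TH by (simp del: upt_Suc)
qed

lemma hole_odd_cycle:
  assumes k: "k = 2*m + 1"
  shows "hole_faults (zigzag_next k) (centre k) (map (bounce k) [1..<1 + k*(k+1)]) = k + 1
       \<and> hole_final (zigzag_next k) (centre k) (map (bounce k) [1..<1 + k*(k+1)]) = centre k"
proof -
  have e: "2*k*(m+1) - (m - m) + 1 = 1 + k*(k+1)" using k by (simp add: algebra_simps)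
  have n0: "zigzag_next k 0 = centre k" using zigzag_next_odd(3)[OF k, of m] zigzag_next_odd(1)[OF k] by simp
  show ?thesis using hole_odd_rounds[OF k, of m] n0 k unfolding e by (simp del: upt_Suc)
qed

lemma zigzag_next_even:
  assumes "k = 2*m" "1 \<le> m"
  shows "centre k = m" "zigzag_next k m = m - 1"
    "\<And>i. 1 \<le> i \<Longrightarrow> i \<le> m \<Longrightarrow> zigzag_next k (m - i) = m + i"
    "\<And>i. i < m \<Longrightarrow> zigzag_next k (m + i) = m - i - 1" "zigzag_next k k = m"
proof -
  have c: "centre k = m" unfolding centre_def using assms by simp
  show "centre k = m" by (rule c)
  show "zigzag_next k m = m - 1" unfolding zigzag_next_def c using assms by simp
  show "\<And>i. 1 \<le> i \<Longrightarrow> i \<le> m \<Longrightarrow> zigzag_next k (m - i) = m + i"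
    unfolding zigzag_next_def c using assms by simp
  show "\<And>i. i < m \<Longrightarrow> zigzag_next k (m + i) = m - i - 1" unfolding zigzag_next_def c using assms by simp
  show "zigzag_next k k = m" unfolding zigzag_next_def c using assms by simp
qed

lemma hole_even_first_round:
  assumes k: "k = 2*m" and m1: "1 \<le> m"
  shows "hole_faults (zigzag_next k) (centre k) (map (bounce k) [k+1..<Suc (Suc (2*k - m))]) = 2
    \<and> hole_final (zigzag_next k) (centre k) (map (bounce k) [k+1..<Suc (Suc (2*k - m))]) = m + 1"
proof -
  have k1: "1 \<le> k" using k m1 by simp
  have h1: "hole_faults (zigzag_next k) m (map (bounce k) [k+1..<Suc (2*k - m)]) = 1
      \<and> hole_final (zigzag_next k) m (map (bounce k) [k+1..<Suc (2*k - m)]) = zigzag_next k m"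
  proof (rule hole_single_hit)
    show "k + 1 \<le> 2*k - m" using k m1 by simp
    show "bounce k (2*k - m) = m" using bounce_descending0[OF k1, of "2*k - m"] k by simp
    fix t assume "k + 1 \<le> t" "t < 2*k - m"
    then show "bounce k t \<noteq> m" using bounce_descending0[OF k1, of t] k by simp
  qed
  have h2: "hole_faults (zigzag_next k) (m - 1) (map (bounce k) [Suc (2*k - m)..<Suc (Suc (2*k - m))]) = 1
     \<and> hole_final (zigzag_next k) (m - 1) (map (bounce k) [Suc (2*k - m)..<Suc (Suc (2*k - m))])
         = zigzag_next k (m - 1)"
  proof (rule hole_single_hit)
    show "bounce k (Suc (2*k - m)) = m - 1" using bounce_descending0[OF k1, of "Suc (2*k - m)"] k m1 by simp
  qed auto
  have s: "k + 1 \<le> Suc (2*k - m)" "Suc (2*k - m) \<le> Suc (Suc (2*k - m))" using k m1 by simp_all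
  have "zigzag_next k (m - 1) = m + 1" using zigzag_next_even(3)[OF k m1, of 1] m1 by simp
  then show ?thesis using hole_run_split[OF s, of "zigzag_next k" m "bounce k"] h1 h2
      zigzag_next_even(1,2)[OF k m1] by (simp del: upt_Suc)
qed

lemma hole_even_rounds:
  assumes k: "k = 2*m" and m1: "1 \<le> m"
  shows "1 \<le> i \<Longrightarrow> i \<le> m
    \<Longrightarrow> hole_faults (zigzag_next k) (centre k) (map (bounce k) [k+1..<2*k*i - (m - i) + 1]) = 2*i
    \<and> hole_final (zigzag_next k) (centre k) (map (bounce k) [k+1..<2*k*i - (m - i) + 1]) = m + i"
proof (induction i rule: dec_induct)
  case base
  have "2*k*1 - (m - 1) + 1 = Suc (Suc (2*k - m))" using k m1 by simp
  then show ?case using hole_even_first_round[OF k m1] by (simp del: upt_Suc)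
next
  case (step i)
  define B where "B = 2*k*i"
  have im: "i < m" using step by simp
  have IH: "hole_faults (zigzag_next k) (centre k) (map (bounce k) [k+1..<B - (m - i) + 1]) = 2*i
    \<and> hole_final (zigzag_next k) (centre k) (map (bounce k) [k+1..<B - (m - i) + 1]) = m + i"
    using step im unfolding B_def by simp
  have E: "2*k*(Suc i) - (m - Suc i) + 1 = B + 2*k - (m - Suc i) + 1" unfolding B_def
    by (simp add: algebra_simps)
  let ?R = "map (bounce k) [B - (m - i) + 1..<B + 2*k - (m - Suc i) + 1]"
  have TH: "hole_faults (zigzag_next k) (m + i) ?R = 2
      \<and> hole_final (zigzag_next k) (m + i) ?R = zigzag_next k (m - Suc i)"
  proof -
    have "zigzag_next k (m + i) = m - Suc i" using zigzag_next_even(4)[OF k m1, of i] im by simp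
    then show ?thesis using k im step.hyps unfolding B_def
      by (intro hole_round_trip[where j="i"]) auto
  qed
  have n: "zigzag_next k (m - Suc i) = m + Suc i" using zigzag_next_even(3)[OF k m1, of "Suc i"] im by simp
  have B2: "2*k \<le> B" using step.hyps(1) unfolding B_def by simp
  have s: "k + 1 \<le> B - (m - i) + 1" "B - (m - i) + 1 \<le> B + 2*k - (m - Suc i) + 1"
    using B2 k by simp_all
  show ?case unfolding E using hole_run_split[OF s, of "zigzag_next k" "centre k" "bounce k"] IH TH n by (simp del: upt_Suc)
qed

lemma hole_even_cycle:
  assumes k: "k = 2*m" and m1: "1 \<le> m"
  shows "hole_faults (zigzag_next k) (centre k) (map (bounce k) [k+1..<k + 1 + k*k]) = k + 1
       \<and> hole_final (zigzag_next k) (centre k) (map (bounce k) [k+1..<k + 1 + k*k]) = centre k"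
proof -
  have k1: "1 \<le> k" using k m1 by simp
  have S: "hole_faults (zigzag_next k) (centre k) (map (bounce k) [k+1..<2*k*m + 1]) = 2*m
    \<and> hole_final (zigzag_next k) (centre k) (map (bounce k) [k+1..<2*k*m + 1]) = k"
    using hole_even_rounds[OF k m1, of m] m1 k by simp
  have h: "hole_faults (zigzag_next k) k (map (bounce k) [2*k*m + 1..<Suc (2*k*m + k)]) = 1
     \<and> hole_final (zigzag_next k) k (map (bounce k) [2*k*m + 1..<Suc (2*k*m + k)]) = zigzag_next k k"
  proof (rule hole_single_hit)
    show "bounce k (2*k*m + k) = k" using bounce_ascending[OF k1, of k m] by simp
    fix t assume t: "2*k*m + 1 \<le> t" "t < 2*k*m + k"
    have "bounce k t = bounce k (2*k*m + (t - 2*k*m))" using t by simp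
    also have "\<dots> = t - 2*k*m" using t by (intro bounce_ascending k1) simp
    finally show "bounce k t \<noteq> k" using t by simp
  qed (use k1 in simp)
  have kk: "k*k = 2*k*m" using k by simp
  have s: "k + 1 \<le> 2*k*m + 1" "2*k*m + 1 \<le> Suc (2*k*m + k)" using k m1 by simp_all
  have e: "k + 1 + k*k = Suc (2*k*m + k)" using kk by simp
  show ?thesis unfolding e using hole_run_split[OF s, of "zigzag_next k" "centre k" "bounce k"] S h
      zigzag_next_even(1,5)[OF k m1] k by (simp del: upt_Suc)
qed

lemma hole_cycles:
  assumes "hole_faults f a (map (bounce k) [T..<T + 2*k*h]) = K \<and> hole_final f a (map (bounce k) [T..<T + 2*k*h]) = a"
  shows "hole_faults f a (map (bounce k) [T..<T + 2*k*h*N]) = K*N \<and> hole_final f a (map (bounce k) [T..<T + 2*k*h*N]) = a"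
proof (induction N)
  case 0 then show ?case by simp
next
  case (Suc N)
  have sh: "map (bounce k) [T + 2*k*h*N..<T + 2*k*h*N + 2*k*h] = map (bounce k) [T..<T + 2*k*h]"
    using map_bounce_shift[of k T "h*N" "T + 2*k*h"] by (simp add: algebra_simps)
  have sp: "[T..<T + 2*k*h*Suc N] = [T..<T + 2*k*h*N] @ [T + 2*k*h*N..<T + 2*k*h*N + 2*k*h]"
  proof -
    have "[T..<(T + 2*k*h*N) + 2*k*h] = [T..<T + 2*k*h*N] @ [T + 2*k*h*N..<(T + 2*k*h*N) + 2*k*h]"
      by (rule upt_split) auto
    moreover have e: "T + 2*k*h*Suc N = (T + 2*k*h*N) + 2*k*h" by (simp add: algebra_simps)
    ultimately show ?thesis by (simp only: e)
  qed
  show ?case unfolding sp using Suc sh assms by (simp add: hole_faults_append hole_final_append del: upt_Suc)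
qed

section \<open>The lower bound\<close>

lemma hole_faults_bounce_le:
  assumes k: "1 \<le> k" and h: "1 \<le> h"
    and cycle: "hole_faults f a (map (bounce k) [T..<T + 2*k*h]) = K
           \<and> hole_final f a (map (bounce k) [T..<T + 2*k*h]) = a"
  shows "real (hole_faults f a (map (bounce k) [T..<T + L]))
           \<le> real K / real (2*k*h) * real L + real (2*k*h)"
proof -
  define D where "D = 2*k*h"
  define N where "N = L div D"
  have D: "0 < D" using k h unfolding D_def by simp
  have DN: "D * N \<le> L" unfolding N_def by (rule times_div_less_eq_dividend)
  have rest: "L - D * N < D" using D unfolding N_def by (metis minus_mult_div_eq_mod mod_less_divisor)
  have split: "[T..<T + L] = [T..<T + D * N] @ [T + D * N..<T + L]"
    using DN by (intro upt_split) auto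
  have "hole_faults f a (map (bounce k) [T..<T + D * N]) = K * N
      \<and> hole_final f a (map (bounce k) [T..<T + D * N]) = a"
    using hole_cycles[OF cycle, of N] unfolding D_def by simp
  then have "hole_faults f a (map (bounce k) [T..<T + L])
      = K * N + hole_faults f a (map (bounce k) [T + D * N..<T + L])"
    unfolding split map_append hole_faults_append by simp
  also have "\<dots> \<le> K * N + D"
    using hole_faults_le_length[of f a "map (bounce k) [T + D * N..<T + L]"] rest by simp
  finally have "real (hole_faults f a (map (bounce k) [T..<T + L])) \<le> real K * real N + real D"
    by (metis of_nat_add of_nat_le_iff of_nat_mult)
  moreover have "real K * real N \<le> real K / real D * real L"
  proof -
    have "real D * real N \<le> real L" using DN by (metis of_nat_le_iff of_nat_mult)
    then have "real N \<le> real L / real D" using D by (simp add: field_simps)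
    then have "real K * real N \<le> real K * (real L / real D)" by (intro mult_left_mono) auto
    then show ?thesis by simp
  qed
  ultimately show ?thesis unfolding D_def by linarith
qed

lemma MaxAB_FWF_FIFO_ge_walk:
  fixes V :: "'a set" and p :: "'a list"
  assumes "finite V" "length p = Suc k" "distinct p" "set p \<subseteq> V"
    and "\<And>i. Suc i < length p \<Longrightarrow> E (p ! i) (p ! Suc i)" "\<And>x y. E x y \<Longrightarrow> E y x"
    and "unit_walk J" "set J \<subseteq> {0..k}"
  shows "real (fwf_faults k {} J) - real (fifo_faults k [] J) \<le> MaxAB (FWF k) (FIFO k) (length J) V E"
proof -
  have "set J \<subseteq> {0..<length p}" using assms(2,8) by auto
  then have "FWF k (map ((!) p) J) = fwf_faults k {} J" "FIFO k (map ((!) p) J) = fifo_faults k [] J"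
    using FWF_map_nth FIFO_map_nth assms(3) by blast+
  moreover have "respects_graph V E (map ((!) p) J)"
    using assms(2-) by (intro respects_graph_map_path)
  then have "real (FWF k (map ((!) p) J)) - real (FIFO k (map ((!) p) J))
      \<le> MaxAB (FWF k) (FIFO k) (length J) V E"
    by (rule MaxAB_ge[OF assms(1)]) simp
  ultimately show ?thesis by simp
qed

text \<open>A schedule for the lower bound: the request sequence \<open>requests M\<close> first walks the path so
  that FIFO's queue is loaded in zigzag order, ending at vertex \<open>s\<close>, and then follows the
  bouncing walk for \<open>M\<close> steps. After a warm-up ending at time \<open>T\<close>, FIFO's missing page returns
  to the centre every \<open>h\<close> rounds of the bouncing walk, after \<open>k + 1\<close> faults of FIFO.\<close>
locale bounce_schedule =
  fixes k s T h :: nat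
  assumes k: "1 \<le> k" and h: "1 \<le> h"
    and start: "zigzag k (k - 1) = s" "bounce k s = s"
    and warmup: "s + 1 \<le> T" "T \<le> s + 1 + 2*k"
      "hole_final (zigzag_next k) (zigzag k k) (map (bounce k) [s+1..<T]) = centre k"
    and cycle: "hole_faults (zigzag_next k) (centre k) (map (bounce k) [T..<T + 2*k*h]) = k + 1
      \<and> hole_final (zigzag_next k) (centre k) (map (bounce k) [T..<T + 2*k*h]) = centre k"
begin

definition preload :: "nat list" where "preload = zigzag_walk k (k - 1)"

definition requests :: "nat \<Rightarrow> nat list" where
  "requests M = preload @ map (bounce k) [s+1..<s+1+M]"

lemma s_le: "s \<le> k"
  using bounce_le[OF k, of s] start(2) by simp

lemma preload_props: "unit_walk preload" "preload \<noteq> []" "last preload = s" "set preload \<subseteq> {0..k}"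
  using zigzag_walk_props[of "k - 1" k] start unfolding preload_def by auto

lemma requests_props:
  "unit_walk (requests M)" "set (requests M) \<subseteq> {0..k}" "length (requests M) = length preload + M"
proof -
  have "unit_walk (map (bounce k) [s..<s+1+M])" by (rule unit_walk_map_upt) (rule bounce_Suc[OF k])
  moreover have "map (bounce k) [s..<s+1+M] = s # map (bounce k) [s+1..<s+1+M]"
    using start(2) upt_conv_Cons[of s "s+1+M"] by simp
  ultimately have "unit_walk (last preload # map (bounce k) [s+1..<s+1+M])"
    using preload_props by simp
  then show "unit_walk (requests M)"
    unfolding requests_def using unit_walk_append preload_props by blast
  show "set (requests M) \<subseteq> {0..k}" unfolding requests_def using preload_props bounce_le[OF k] by auto
  show "length (requests M) = length preload + M" unfolding requests_def by simp
qed

lemma fifo_faults_requests: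
  "fifo_faults k [] (requests M) = fifo_faults k [] preload
     + hole_faults (zigzag_next k) (zigzag k k) (map (bounce k) [s+1..<s+1+M])"
proof -
  let ?B = "map (bounce k) [s+1..<s+1+M]"
  have queue: "fifo_queue k [] preload = map (zigzag k) [0..<k]"
    using fifo_queue_zigzag_walk[of "k - 1" k] k unfolding preload_def by simp
  have all: "map (zigzag k) [0..<k] @ [zigzag k k] = map (zigzag k) [0..<Suc k]" by simp
  have "fifo_faults k (map (zigzag k) [0..<k]) ?B = hole_faults (zigzag_next k) (zigzag k k) ?B"
  proof (rule fifo_faults_eq_hole_faults)
    show "distinct (map (zigzag k) [0..<k] @ [zigzag k k])" unfolding all by (rule distinct_zigzag)
    show "cyclic_succ (zigzag_next k) (map (zigzag k) [0..<k] @ [zigzag k k])"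
      unfolding all by (rule cyclic_succ_zigzag[OF k])
    have "set ?B \<subseteq> {0..k}" using bounce_le[OF k] by auto
    then show "set ?B \<subseteq> set (map (zigzag k) [0..<k] @ [zigzag k k])" unfolding all set_zigzag .
  qed (use k in simp_all)
  then show ?thesis unfolding requests_def fifo_faults_append queue by simp
qed

lemma fifo_faults_requests_le:
  "real (fifo_faults k [] (requests M))
     \<le> real (k + 1) / real (2*k*h) * real M + real (length preload + 2*k + 2*k*h)"
proof -
  let ?f = "zigzag_next k" and ?B = "\<lambda>a b. map (bounce k) [a..<b]"
  define q where "q = real (k + 1) / real (2*k*h)"
  have q: "0 \<le> q" unfolding q_def by simp
  have "real (hole_faults ?f (zigzag k k) (?B (s+1) (s+1+M))) \<le> q * real M + real (2*k + 2*k*h)"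
  proof (cases "T \<le> s + 1 + M")
    case True
    from True obtain L where L: "s + 1 + M = T + L" "L \<le> M" using warmup(1) le_Suc_ex by fastforce
    have "[s+1..<T + L] = [s+1..<T] @ [T..<T + L]" using warmup(1) by (intro upt_split) auto
    then have "hole_faults ?f (zigzag k k) (?B (s+1) (s+1+M))
        \<le> length (?B (s+1) T) + hole_faults ?f (centre k) (?B T (T + L))"
      unfolding L(1) using hole_faults_append_le[of ?f "zigzag k k" "?B (s+1) T"] warmup(3)
      by (simp del: upt_Suc)
    moreover have "real (hole_faults ?f (centre k) (?B T (T + L))) \<le> q * real L + real (2*k*h)"
      unfolding q_def by (rule hole_faults_bounce_le[OF k h cycle])
    moreover have "q * real L \<le> q * real M" using L(2) q by (intro mult_left_mono) auto
    ultimately show ?thesis using warmup(2) by simp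
  next
    case False
    then have "length (?B (s+1) (s+1+M)) \<le> 2*k" using warmup(2) by (simp del: upt_Suc)
    then have "real (hole_faults ?f (zigzag k k) (?B (s+1) (s+1+M))) \<le> real (2*k)"
      using hole_faults_le_length le_trans of_nat_le_iff by blast
    moreover have "0 \<le> q * real M" using q by simp
    moreover have "real (2*k) \<le> real (2*k + 2*k*h)" by simp
    ultimately show ?thesis by linarith
  qed
  moreover have "fifo_faults k [] preload \<le> length preload" by (rule fifo_faults_le_length)
  ultimately show ?thesis unfolding fifo_faults_requests q_def by (simp del: upt_Suc)
qed

lemma fwf_faults_requests_ge: "M \<le> fwf_faults k {} (requests M) + 6*k"
proof (cases "2*k \<le> s + 1 + M")
  case True
  let ?X = "preload @ map (bounce k) [s+1..<2*k*1]"
  from True obtain L where L: "s + 1 + M = 2*k*1 + L" using le_Suc_ex by fastforce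
  have "[s+1..<2*k*1 + L] = [s+1..<2*k*1] @ [2*k*1..<2*k*1 + L]"
    using s_le k by (intro upt_split) auto
  then have split: "requests M = ?X @ map (bounce k) [2*k*1..<2*k*1 + L]"
    unfolding requests_def L by (simp del: upt_Suc)
  have "finite (fwf_cache k {} ?X) \<and> card (fwf_cache k {} ?X) \<le> k"
    by (rule fwf_cache_card_le[OF k]) simp_all
  then have "L \<le> fwf_faults k (fwf_cache k {} ?X) (map (bounce k) [2*k*1..<2*k*1 + L]) + 4*k"
    using fwf_faults_bounce_ge[OF k] by blast
  then show ?thesis unfolding split fwf_faults_append using L by linarith
qed linarith

lemma MaxAB_FWF_FIFO_ge_linear:
  fixes V :: "'a set" and p :: "'a list"
  assumes "finite V" "length p = Suc k" "distinct p" "set p \<subseteq> V"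
    and "\<And>i. Suc i < length p \<Longrightarrow> E (p ! i) (p ! Suc i)" "\<And>x y. E x y \<Longrightarrow> E y x"
    and n: "length preload \<le> n"
  shows "(1 - real (k + 1) / real (2*k*h)) * real n - real (2 * length preload + 8*k + 2*k*h)
           \<le> MaxAB (FWF k) (FIFO k) n V E"
proof -
  define M where "M = n - length preload"
  define q where "q = real (k + 1) / real (2*k*h)"
  have n_eq: "n = length preload + M" unfolding M_def using n by simp
  have "real (fwf_faults k {} (requests M)) - real (fifo_faults k [] (requests M))
          \<le> MaxAB (FWF k) (FIFO k) n V E"
    using MaxAB_FWF_FIFO_ge_walk[where E=E, OF assms(1-6) requests_props(1,2)] requests_props(3) n_eq by simp
  moreover have "(1 - q) * real n \<le> (1 - q) * real M + real (length preload)"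
  proof -
    have "(1 - q) * real n = (1 - q) * real M + real (length preload) - q * real (length preload)"
      unfolding n_eq by (simp add: algebra_simps)
    moreover have "0 \<le> q * real (length preload)" unfolding q_def by simp
    ultimately show ?thesis by linarith
  qed
  moreover have "real M \<le> real (fwf_faults k {} (requests M)) + 6 * real k"
    using fwf_faults_requests_ge[of M] by (metis of_nat_add of_nat_le_iff of_nat_mult of_nat_numeral)
  moreover have "real (fifo_faults k [] (requests M))
      \<le> q * real M + real (length preload) + 2 * real k + real (2*k*h)"
    using fifo_faults_requests_le[of M, folded q_def] by simp
  moreover have "(1 - q) * real M = real M - q * real M" by (simp add: algebra_simps)
  moreover have "real (2 * length preload + 8*k + 2*k*h)
      = 2 * real (length preload) + 8 * real k + real (2*k*h)" by simp
  ultimately show ?thesis unfolding q_def[symmetric] by linarith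
qed

end

lemma bounce_schedule_odd:
  assumes k: "k = 2*m + 1" and m: "1 \<le> m"
  shows "bounce_schedule k k (2*k+1) (m+1)"
proof
  have k1: "1 \<le> k" using k by simp
  show "1 \<le> k" by (rule k1)
  show "1 \<le> m + 1" by simp
  show "zigzag k (k - 1) = k" using zigzag_odd_end[OF k] by simp
  show "bounce k k = k" by (rule bounce_ascending0[OF k1]) simp
  show "k + 1 \<le> 2*k + 1" "2*k + 1 \<le> k + 1 + 2*k" by simp_all
  have h: "hole_faults (zigzag_next k) 0 (map (bounce k) [k+1..<Suc (2*k)]) = 1
      \<and> hole_final (zigzag_next k) 0 (map (bounce k) [k+1..<Suc (2*k)]) = zigzag_next k 0"
  proof (rule hole_single_hit)
    show "bounce k (2*k) = 0" using bounce_descending0[OF k1, of "2*k"] by simp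
    fix t assume "k + 1 \<le> t" "t < 2*k"
    then show "bounce k t \<noteq> 0" using bounce_descending0[OF k1, of t] by simp
  qed (use k1 in simp)
  have "zigzag_next k (m - m) = m + 1" using zigzag_next_odd(3)[OF k, of m] by simp
  then have n0: "zigzag_next k 0 = centre k" using zigzag_next_odd(1)[OF k] by simp
  show "hole_final (zigzag_next k) (zigzag k k) (map (bounce k) [k+1..<2*k+1]) = centre k"
    using h n0 zigzag_odd_end[OF k] by simp
  have C: "hole_faults (zigzag_next k) (centre k) (map (bounce k) [1..<1 + k*(k+1)]) = k + 1
       \<and> hole_final (zigzag_next k) (centre k) (map (bounce k) [1..<1 + k*(k+1)]) = centre k"
    by (rule hole_odd_cycle[OF k])
  have e: "2*k*(m+1) = k*(k+1)" using k by (simp add: algebra_simps)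
  have sh: "map (bounce k) [2*k+1..<2*k+1 + k*(k+1)] = map (bounce k) [1..<1 + k*(k+1)]"
  proof -
    have "[2*k+1..<2*k+1 + k*(k+1)] = [1 + 2*k*1..<1 + k*(k+1) + 2*k*1]"
      by (rule arg_cong2[where f=upt]) (simp_all add: algebra_simps)
    then show ?thesis using map_bounce_shift[of k 1 1 "1 + k*(k+1)"] by (simp only:)
  qed
  show "hole_faults (zigzag_next k) (centre k) (map (bounce k) [2*k+1..<2*k+1 + 2*k*(m+1)]) = k + 1
       \<and> hole_final (zigzag_next k) (centre k) (map (bounce k) [2*k+1..<2*k+1 + 2*k*(m+1)]) = centre k"
    unfolding e sh by (rule C)
qed

lemma bounce_schedule_even:
  assumes k: "k = 2*m" and m: "1 \<le> m"
  shows "bounce_schedule k 0 (k+1) m"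
proof
  have k1: "1 \<le> k" using k m by simp
  show "1 \<le> k" by (rule k1)
  show "1 \<le> m" by (rule m)
  show "zigzag k (k - 1) = 0" using zigzag_even_end[OF k m] by simp
  show "bounce k 0 = 0" by (rule bounce_ascending0[OF k1]) simp
  show "0 + 1 \<le> k + 1" "k + 1 \<le> 0 + 1 + 2*k" by simp_all
  have h: "hole_faults (zigzag_next k) k (map (bounce k) [1..<Suc k]) = 1
      \<and> hole_final (zigzag_next k) k (map (bounce k) [1..<Suc k]) = zigzag_next k k"
  proof (rule hole_single_hit)
    show "bounce k k = k" by (rule bounce_ascending0[OF k1]) simp
    fix t assume "1 \<le> t" "t < k"
    then show "bounce k t \<noteq> k" using bounce_ascending0[OF k1, of t] by simp
  qed (use k1 in simp)
  show "hole_final (zigzag_next k) (zigzag k k) (map (bounce k) [0+1..<k+1]) = centre k"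
    using h zigzag_next_even(1,5)[OF k m] zigzag_even_end[OF k m] by simp
  have e: "2*k*m = k*k" using k by simp
  show "hole_faults (zigzag_next k) (centre k) (map (bounce k) [k+1..<k+1 + 2*k*m]) = k + 1
       \<and> hole_final (zigzag_next k) (centre k) (map (bounce k) [k+1..<k+1 + 2*k*m]) = centre k"
    unfolding e by (rule hole_even_cycle[OF k m])
qed

lemma has_path_vertex:
  assumes "has_path V E (Suc n)"
  obtains v where "v \<in> V"
  using assms unfolding has_path_def by (metis in_mono length_Suc_conv list.set_intros(1))

lemma MaxG_FWF_FIFO_ge_schedule:
  assumes "bounce_schedule k s T h" "access_graph V E" "has_path V E (k + 1)"
  shows "ereal (1 - real (k + 1) / real (2*k*h)) \<le> MaxG (FWF k) (FIFO k) V E"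
proof -
  interpret bounce_schedule k s T h by (rule assms(1))
  obtain p where "length p = Suc k" "distinct p" "set p \<subseteq> V"
    "\<And>i. Suc i < length p \<Longrightarrow> E (p ! i) (p ! Suc i)"
    using assms(3) unfolding has_path_def by auto
  moreover have "finite V" "\<And>x y. E x y \<Longrightarrow> E y x" using assms(2) unfolding access_graph_def by auto
  ultimately show ?thesis unfolding MaxG_def
    by (intro limsup_ratio_ge[where N="length preload" and C="real (2 * length preload + 8*k + 2*k*h)"]
        MaxAB_FWF_FIFO_ge_linear)
qed

lemma MaxG_FWF_FIFO_ge_odd:
  assumes "odd k" "access_graph V E" "has_path V E (k + 1)"
  shows "ereal (1 - 1 / real k) \<le> MaxG (FWF k) (FIFO k) V E"
proof -
  obtain m where k: "k = 2*m + 1" using assms(1) oddE by blast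
  show ?thesis
  proof (cases "m = 0")
    case True
    obtain v where "v \<in> V" using assms(3) by (metis Suc_eq_plus1 has_path_vertex)
    then show ?thesis using True k MaxG_FWF_FIFO_nonneg[of k V v E] assms(2)
      by (simp add: access_graph_def zero_ereal_def)
  next
    case False
    have "real (2*k*(m+1)) = real k * real (k + 1)" unfolding k by (simp add: algebra_simps)
    then have "1 - real (k + 1) / real (2*k*(m+1)) = 1 - 1 / real k" by simp
    then show ?thesis
      using MaxG_FWF_FIFO_ge_schedule[OF bounce_schedule_odd assms(2,3)] k False by simp
  qed
qed

lemma MaxG_FWF_FIFO_ge_even:
  assumes "even k" "1 \<le> k" "access_graph V E" "has_path V E (k + 1)"
  shows "ereal ((real k ^ 2 - real k - 1) / real k ^ 2) \<le> MaxG (FWF k) (FIFO k) V E"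
proof -
  obtain m where k: "k = 2*m" using assms(1) by blast
  have m: "1 \<le> m" using k assms(2) by simp
  have "real (2*k*m) = real k ^ 2" using k by (simp add: power2_eq_square)
  then have "1 - real (k + 1) / real (2*k*m) = (real k ^ 2 - real k - 1) / real k ^ 2"
    using assms(2) by (simp add: field_simps)
  then show ?thesis using MaxG_FWF_FIFO_ge_schedule[OF bounce_schedule_even[OF k m] assms(3,4)] by simp
qed

theorem theorem3:
  fixes k :: nat and V :: "'a set" and E :: "'a \<Rightarrow> 'a \<Rightarrow> bool"
  assumes "k \<ge> 1"
    and "access_graph V E"
    and "has_path V E (k + 1)"
  shows "(odd k \<longrightarrow>
            rel_interval (FWF k) (FIFO k) V E = {0 .. ereal (1 - 1 / real k)})
       \<and> (even k \<longrightarrow>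
            {0 .. ereal ((real k ^ 2 - real k - 1) / real k ^ 2)} \<subseteq> rel_interval (FWF k) (FIFO k) V E
          \<and> rel_interval (FWF k) (FIFO k) V E \<subseteq> {0 .. ereal ((real k - 1) / real k)})"
proof -
  obtain v where v: "v \<in> V" using assms(3) by (metis Suc_eq_plus1 has_path_vertex)
  have V: "finite V" using assms(2) unfolding access_graph_def by simp
  have interval: "rel_interval (FWF k) (FIFO k) V E = {0 .. MaxG (FWF k) (FIFO k) V E}"
    unfolding rel_interval_def MinG_FWF_FIFO[OF assms(1) V v] ..
  have "MaxG (FWF k) (FIFO k) V E \<le> ereal (1 - 1 / real k)"
    by (rule MaxG_FWF_FIFO_le[OF assms(1) V v])
  moreover have "1 - 1 / real k = (real k - 1) / real k" using assms(1) by (simp add: field_simps)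
  ultimately show ?thesis
    using MaxG_FWF_FIFO_ge_odd[OF _ assms(2,3)] MaxG_FWF_FIFO_ge_even[OF _ assms]
    unfolding interval by (auto intro: antisym order_trans)
qed

end
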